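(* Let $q:\mathbb{R}^2\to\mathbb{C}^N$ be smooth, let $n\ge1$, and for $j=1,\dots,n$ let $\Phi_j$ be a solution of the Lax pair at $\lambda=\lambda_j$, where $\lambda_j\neq\overline{\lambda_i}$ whenever $i\neq j$. Let $\Phi$ be a solution at $\lambda$ with $\lambda\notin\{\overline{\lambda_1},\dots,\overline{\lambda_n}\}$. Define the $n\times n$ matrix $M=(M_{ij})$ by $M_{ij}=\dfrac{\Phi_i^{\dagger}\Lambda\Phi_j}{\mathrm{i}(\lambda_j-\overline{\lambda_i})}$ for $i\neq j$ and for $i=j$ with $\lambda_i\notin\mathbb{R}$; for $i$ with $\lambda_i\in\mathbb{R}$ assume $\Phi_i^{\dagger}\Lambda\Phi_i\equiv0$ and let $M_{ii}$ be a real-valued smooth function with $dM_{ii}=\omega(\Phi_i,\Phi_i)$. Assume $M$ is invertible everywhere. Let $Y=(\Phi_1,\dots,\Phi_n)$ be the $(N+1)\times n$ matrix with columns $\Phi_j$ and let $\Omega$ be the column vector with entries $\Omega_i=\dfrac{\Phi_i^{\dagger}\Lambda\Phi}{\mathrm{i}(\lambda-\overline{\lambda_i})}$. Set $$\Phi[n]=\Phi-YM^{-1}\Omega,\qquad Q[n]=Q-\mathrm{i}\big[\sigma_3,\;YM^{-1}Y^{\dagger}\Lambda\big].$$ Then $\Phi[n]_x=(\mathrm{i}\lambda\sigma_3+\mathrm{i}Q[n])\Phi[n]$ and $\Phi[n]_t=\big(\mathrm{i}\lambda^2\sigma_3+\mathrm{i}\lambda Q[n]-\tfrac12(\mathrm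{i}\sigma_3Q[n]^2-\sigma_3Q[n]_x)\big)\Phi[n]$.
   Context: Fix integers $N\ge1$ and $0\le k\le N$, and let $S=\mathrm{diag}(s_1,\dots,s_N)$ with $s_l=1$ for $l\le k$ and $s_l=-1$ for $l>k$. The $N$-component NLS equation is $\mathrm{i}\mathbf q_t+\tfrac12\mathbf q_{xx}-\mathbf q\,(\mathbf q^{\dagger}S\mathbf q)=0$ for $\mathbf q=(q_1,\dots,q_N)^T:\mathbb{R}^2\to\mathbb{C}^N$ (here ${}^\dagger$ is conjugate transpose). Its Lax pair is $\Phi_x=(\mathrm{i}\lambda\sigma_3+\mathrm{i}Q)\Phi$, $\Phi_t=\big(\mathrm{i}\lambda^2\sigma_3+\mathrm{i}\lambda Q-\tfrac12(\mathrm{i}\sigma_3Q^2-\sigma_3Q_x)\big)\Phi$, for $\Phi:\mathbb{R}^2\to\mathbb{C}^{N+1}$ and spectral parameter $\lambda\in\mathbb{C}$, where $Q=\begin{pmatrix}0&-\mathbf q^{\dagger}S\\ \mathbf q&0_{N\times N}\end{pmatrix}$ and $\sigma_3=\mathrm{diag}(1,-I_N)$. A "solution at $\lambda$" is a smooth $\Phi$ satisfying both equations with that value of $\lambda$. Let $\Lambda=\mathrm{diag}(1,-s_1,\dots,-s_N)$ (i.e. $1$, then $-1$ repeated $k$ times, then $1$ repeated $N-k$ times). For a solution $\Phi_1$ at $\lambda_1$ and a solution $\Phi$ at $\lambda$, $\omega(\Phi_1,\Phi)$ denotes the $1$-form $\Phi_1^{\dagger}\Lambda\sigma_3\Phi\,dx+[(\lambda+\overline{\lambda_1})\Phi_1^{\dagger}\Lambda\sigma_3\Phi+\Phi_1^{\dagger}\Lambda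 Q\Phi]\,dt$. $[A,B]=AB-BA$. *)

theory Defs
  imports "HOL-Analysis.Derivative" "Jordan_Normal_Form.Gauss_Jordan_Elimination"
begin

fun pd :: "bool list \<Rightarrow> (real \<Rightarrow> real \<Rightarrow> complex) \<Rightarrow> real \<Rightarrow> real \<Rightarrow> complex" where
  "pd [] f = f"
| "pd (True # ds) f = (\<lambda>x t. vector_derivative (\<lambda>y. pd ds f y t) (at x))"
| "pd (False # ds) f = (\<lambda>x t. vector_derivative (\<lambda>s. pd ds f x s) (at t))"

definition smooth2 :: "(real \<Rightarrow> real \<Rightarrow> complex) \<Rightarrow> bool" where
  "smooth2 f \<longleftrightarrow> (\<forall>ds. continuous_on UNIV (\<lambda>(x, t). pd ds f x t)
      \<and> (\<forall>x t. (\<lambda>y. pd ds f y t) differentiable (at x) \<and> (\<lambda>s. pd ds f x s) differentiable (at t)))"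

definition vhas_dx :: "(real \<Rightarrow> real \<Rightarrow> complex vec) \<Rightarrow> complex vec \<Rightarrow> real \<Rightarrow> real \<Rightarrow> bool" where
  "vhas_dx F G x t \<longleftrightarrow> dim_vec G = dim_vec (F x t) \<and> (\<forall>y. dim_vec (F y t) = dim_vec (F x t)) \<and>
     (\<forall>i < dim_vec (F x t). ((\<lambda>y. F y t $ i) has_vector_derivative G $ i) (at x))"

definition vhas_dt :: "(real \<Rightarrow> real \<Rightarrow> complex vec) \<Rightarrow> complex vec \<Rightarrow> real \<Rightarrow> real \<Rightarrow> bool" where
  "vhas_dt F G x t \<longleftrightarrow> dim_vec G = dim_vec (F x t) \<and> (\<forall>s. dim_vec (F x s) = dim_vec (F x t)) \<and>
     (\<forall>i < dim_vec (F x t). ((\<lambda>s. F x s $ i) has_vector_derivative G $ i) (at t))"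

definition mdx :: "(real \<Rightarrow> real \<Rightarrow> complex mat) \<Rightarrow> real \<Rightarrow> real \<Rightarrow> complex mat" where
  "mdx F x t = mat (dim_row (F x t)) (dim_col (F x t))
     (\<lambda>(i, j). vector_derivative (\<lambda>y. F y t $$ (i, j)) (at x))"

definition mdiff_x :: "(real \<Rightarrow> real \<Rightarrow> complex mat) \<Rightarrow> real \<Rightarrow> real \<Rightarrow> bool" where
  "mdiff_x F x t \<longleftrightarrow> (\<forall>y. dim_row (F y t) = dim_row (F x t) \<and> dim_col (F y t) = dim_col (F x t)) \<and>
     (\<forall>i < dim_row (F x t). \<forall>j < dim_col (F x t). (\<lambda>y. F y t $$ (i, j)) differentiable (at x))"

text \<open>s_l for the 0-based component index l (paper's s_{l+1}).\<close>
definition sgnS :: "nat \<Rightarrow> nat \<Rightarrow> complex" where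
  "sgnS k l = (if l < k then 1 else -1)"

definition sigma3 :: "nat \<Rightarrow> complex mat" where
  "sigma3 N = mat (N+1) (N+1) (\<lambda>(i, j). if i = j then (if i = 0 then 1 else -1) else 0)"

definition LambdaM :: "nat \<Rightarrow> nat \<Rightarrow> complex mat" where
  "LambdaM N k = mat (N+1) (N+1) (\<lambda>(i, j). if i = j then (if i = 0 then 1 else - sgnS k (i - 1)) else 0)"

text \<open>Q = [[0, -q^dagger S],[q, 0]], with q given by its components q x t l, l < N.\<close>
definition Qmat :: "nat \<Rightarrow> nat \<Rightarrow> (real \<Rightarrow> real \<Rightarrow> nat \<Rightarrow> complex) \<Rightarrow> real \<Rightarrow> real \<Rightarrow> complex mat" where
  "Qmat N k q x t = mat (N+1) (N+1) (\<lambda>(i, j).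
      if i = 0 \<and> j \<ge> 1 then - cnj (q x t (j - 1)) * sgnS k (j - 1)
      else if i \<ge> 1 \<and> j = 0 then q x t (i - 1) else 0)"

definition Ux :: "nat \<Rightarrow> complex \<Rightarrow> (real \<Rightarrow> real \<Rightarrow> complex mat) \<Rightarrow> real \<Rightarrow> real \<Rightarrow> complex mat" where
  "Ux N lam Qf x t = (\<i> * lam) \<cdot>\<^sub>m sigma3 N + \<i> \<cdot>\<^sub>m Qf x t"

definition Vt :: "nat \<Rightarrow> complex \<Rightarrow> (real \<Rightarrow> real \<Rightarrow> complex mat) \<Rightarrow> real \<Rightarrow> real \<Rightarrow> complex mat" where
  "Vt N lam Qf x t = (\<i> * lam^2) \<cdot>\<^sub>m sigma3 N + (\<i> * lam) \<cdot>\<^sub>m Qf x t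
      - (1/2) \<cdot>\<^sub>m (\<i> \<cdot>\<^sub>m (sigma3 N * (Qf x t * Qf x t)) - sigma3 N * mdx Qf x t)"

definition lax_solution :: "nat \<Rightarrow> nat \<Rightarrow> (real \<Rightarrow> real \<Rightarrow> nat \<Rightarrow> complex) \<Rightarrow> complex
     \<Rightarrow> (real \<Rightarrow> real \<Rightarrow> complex vec) \<Rightarrow> bool" where
  "lax_solution N k q lam Phi \<longleftrightarrow>
     (\<forall>x t. dim_vec (Phi x t) = N+1) \<and> (\<forall>i < N+1. smooth2 (\<lambda>x t. Phi x t $ i)) \<and>
     (\<forall>x t. vhas_dx Phi (Ux N lam (Qmat N k q) x t *\<^sub>v Phi x t) x t \<and>
            vhas_dt Phi (Vt N lam (Qmat N k q) x t *\<^sub>v Phi x t) x t)"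

definition herm :: "complex vec \<Rightarrow> complex mat \<Rightarrow> complex vec \<Rightarrow> complex" where
  "herm u A v = (\<Sum>i < dim_vec u. cnj (u $ i) * (A *\<^sub>v v) $ i)"

text \<open>The dx- and dt-coefficients of the 1-form omega(Phi1, Phi), Phi1 at lam1, Phi at lam.\<close>
definition omega_x :: "nat \<Rightarrow> nat \<Rightarrow> complex vec \<Rightarrow> complex vec \<Rightarrow> complex" where
  "omega_x N k u v = herm u (LambdaM N k * sigma3 N) v"

definition omega_t :: "nat \<Rightarrow> nat \<Rightarrow> complex mat \<Rightarrow> complex \<Rightarrow> complex \<Rightarrow> complex vec \<Rightarrow> complex vec \<Rightarrow> complex" where
  "omega_t N k Qv lam1 lam u v = (lam + cnj lam1) * herm u (LambdaM N k * sigma3 N) v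
      + herm u (LambdaM N k * Qv) v"

definition adj :: "complex mat \<Rightarrow> complex mat" where
  "adj A = mat (dim_col A) (dim_row A) (\<lambda>(i, j). cnj (A $$ (j, i)))"

definition minv :: "complex mat \<Rightarrow> complex mat" where
  "minv A = the (mat_inverse A)"

end

theory Submission
  imports Defs "Jordan_Normal_Form.Determinant"
begin

text \<open>The columns \<open>\<Phi>\<^sub>j\<close> of Y solve the Lax pair, so \<open>Y\<^sub>x = \<sigma>\<^sub>3 Y (\<i>D) + \<i>QY\<close> with
  \<open>D = diag(\<lambda>\<^sub>j)\<close>. The identity \<open>U(a)\<^sup>\<dagger>\<Lambda> + \<Lambda>U(b) = \<i>(b - cnj a)\<Lambda>\<sigma>\<^sub>3\<close> (and its t-analogue) says that the
  entries of M and \<open>\<Omega>\<close> are potentials of \<open>\<omega>\<close>, so \<open>M\<^sub>x = Y\<^sup>\<dagger>\<Lambda>\<sigma>\<^sub>3Y\<close> and \<open>\<Omega>\<^sub>x = Y\<^sup>\<dagger>\<Lambda>\<sigma>\<^sub>3\<Phi>\<close>. The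
  definition of M gives the Sylvester equation \<open>Y\<^sup>\<dagger>\<Lambda>Y = \<i>(MD - D\<^sup>\<dagger>M)\<close>, which holds on the diagonal entries with real
  \<open>\<lambda>\<^sub>i\<close> because there both sides vanish. Differentiating \<open>\<Phi>[n] = \<Phi> - YM\<^sup>-\<^sup>1\<Omega>\<close> with
  \<open>(M\<^sup>-\<^sup>1)' = -M\<^sup>-\<^sup>1M'M\<^sup>-\<^sup>1\<close>, and eliminating \<open>DM\<^sup>-\<^sup>1\<close> by the Sylvester equation, both Lax equations for
  \<open>\<Phi>[n]\<close> become polynomial identities in non-commuting matrices subject to
  \<open>\<sigma>\<^sub>3\<^sup>2 = 1\<close>, \<open>\<sigma>\<^sub>3\<Lambda> = \<Lambda>\<sigma>\<^sub>3\<close>, \<open>Q\<sigma>\<^sub>3 = -\<sigma>\<^sub>3Q\<close> and \<open>Q\<^sup>\<dagger>\<Lambda> = \<Lambda>Q\<close>; for the t-equation one also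
  needs \<open>Q[n]\<^sup>2 = Q\<^sup>2 + \<sigma>\<^sub>3P\<^sub>x + P\<^sub>x\<sigma>\<^sub>3\<close>, where \<open>P = YM\<^sup>-\<^sup>1Y\<^sup>\<dagger>\<Lambda>\<close>.\<close>

lemma assoc_mult_mat_dims:
  "dim_col A = dim_row B \<Longrightarrow> dim_col B = dim_row C \<Longrightarrow> A * B * C = A * (B * (C::'a::comm_ring_1 mat))"
  by (metis assoc_mult_mat carrier_matI)

lemma mult_add_distrib_mat_dims:
  "dim_col A = dim_row B \<Longrightarrow> dim_row B = dim_row C \<Longrightarrow> dim_col B = dim_col C \<Longrightarrow>
   A * (B + C) = A * B + A * (C::'a::comm_ring_1 mat)"
  by (metis mult_add_distrib_mat carrier_matI)

lemma add_mult_distrib_mat_dims: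
  "dim_row A = dim_row B \<Longrightarrow> dim_col A = dim_col B \<Longrightarrow> dim_col A = dim_row C \<Longrightarrow>
   (A + B) * C = A * C + B * (C::'a::comm_ring_1 mat)"
  by (metis add_mult_distrib_mat carrier_matI)

lemma minus_mat_eq_add_smult:
  "dim_row A = dim_row B \<Longrightarrow> dim_col A = dim_col B \<Longrightarrow> A - B = A + (-1) \<cdot>\<^sub>m (B::'a::comm_ring_1 mat)"
  by (rule eq_matI) auto

lemma uminus_mat_eq_smult: "- A = (-1) \<cdot>\<^sub>m (A::'a::comm_ring_1 mat)"
  by (rule eq_matI) auto

lemma mult_smult_assoc_mat_dims:
  "dim_col A = dim_row B \<Longrightarrow> (c \<cdot>\<^sub>m A) * B = c \<cdot>\<^sub>m (A * (B::'a::comm_ring_1 mat))"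
  by (metis mult_smult_assoc_mat carrier_matI)

lemma mult_smult_distrib_dims:
  "dim_col A = dim_row B \<Longrightarrow> A * (c \<cdot>\<^sub>m B) = c \<cdot>\<^sub>m (A * (B::'a::comm_ring_1 mat))"
  by (metis mult_smult_distrib carrier_matI)

lemma smult_smult_mat: "c \<cdot>\<^sub>m (d \<cdot>\<^sub>m A) = (c * d) \<cdot>\<^sub>m (A::'a::comm_ring_1 mat)"
  by (rule eq_matI) auto

lemma smult_add_distrib_mat_dims:
  "dim_row A = dim_row B \<Longrightarrow> dim_col A = dim_col B \<Longrightarrow> c \<cdot>\<^sub>m (A + B) = c \<cdot>\<^sub>m A + c \<cdot>\<^sub>m (B::'a::comm_ring_1 mat)"
  by (rule eq_matI) (simp_all add: algebra_simps)

lemma left_mult_one_mat_dims: "dim_row A = n \<Longrightarrow> 1\<^sub>m n * A = (A::'a::comm_ring_1 mat)"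
  by (metis left_mult_one_mat carrier_matI)

lemma right_mult_one_mat_dims: "dim_col A = n \<Longrightarrow> A * 1\<^sub>m n = (A::'a::comm_ring_1 mat)"
  by (metis right_mult_one_mat carrier_matI)

lemma one_smult_mat: "1 \<cdot>\<^sub>m A = (A::'a::comm_ring_1 mat)"
  by (rule eq_matI) auto

lemma assoc_mult_mat_vec_dims:
  "dim_col A = dim_row B \<Longrightarrow> dim_col B = dim_vec v \<Longrightarrow> A * B *\<^sub>v v = A *\<^sub>v (B *\<^sub>v (v::'a::comm_ring_1 vec))"
  by (metis assoc_mult_mat_vec carrier_matI carrier_vecI)

lemma mult_add_distrib_mat_vec_dims:
  "dim_col A = dim_vec v \<Longrightarrow> dim_vec v = dim_vec w \<Longrightarrow> A *\<^sub>v (v + w) = A *\<^sub>v v + A *\<^sub>v (w::'a::comm_ring_1 vec)"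
  by (metis mult_add_distrib_mat_vec carrier_matI carrier_vecI)

lemma add_mult_distrib_mat_vec_dims:
  "dim_row A = dim_row B \<Longrightarrow> dim_col A = dim_col B \<Longrightarrow> dim_col A = dim_vec v \<Longrightarrow>
   (A + B) *\<^sub>v v = A *\<^sub>v v + B *\<^sub>v (v::'a::comm_ring_1 vec)"
  by (metis add_mult_distrib_mat_vec carrier_matI carrier_vecI)

lemma minus_vec_eq_add_smult: "dim_vec v = dim_vec w \<Longrightarrow> v - w = v + (-1) \<cdot>\<^sub>v (w::'a::comm_ring_1 vec)"
  by (rule eq_vecI) auto

lemma uminus_vec_eq_smult: "- v = (-1) \<cdot>\<^sub>v (v::'a::comm_ring_1 vec)"
  by (rule eq_vecI) auto

lemma smult_mat_mult_vec_dims: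
  "dim_col A = dim_vec v \<Longrightarrow> (c \<cdot>\<^sub>m A) *\<^sub>v v = c \<cdot>\<^sub>v (A *\<^sub>v (v::'a::comm_ring_1 vec))"
  by (rule eq_vecI) (auto simp: scalar_prod_def sum_distrib_left ac_simps)

lemma mult_mat_vec_smult_dims:
  "dim_col A = dim_vec v \<Longrightarrow> A *\<^sub>v (c \<cdot>\<^sub>v v) = c \<cdot>\<^sub>v (A *\<^sub>v (v::'a::comm_ring_1 vec))"
  by (rule eq_vecI) (auto simp: scalar_prod_def sum_distrib_left ac_simps)

lemma smult_add_distrib_vec_dims:
  "dim_vec v = dim_vec w \<Longrightarrow> c \<cdot>\<^sub>v (v + w) = c \<cdot>\<^sub>v v + c \<cdot>\<^sub>v (w::'a::comm_ring_1 vec)"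
  by (rule eq_vecI) (simp_all add: algebra_simps)

lemma one_mult_mat_vec_dims: "dim_vec v = n \<Longrightarrow> 1\<^sub>m n *\<^sub>v v = (v::'a::comm_ring_1 vec)"
  by (metis one_mult_mat_vec carrier_vecI)

text \<open>The rules collected below rewrite a matrix expression into a sum of scalar multiples of
  right-associated products; their side conditions are dimension equations, discharged by the
  simplifier from the dimensions of the atoms. After this normalisation, an identity between
  polynomial expressions in non-commuting matrices is checked entrywise with the entries of
  products kept as atoms.\<close>

lemmas mat_normalize =
  one_smult_mat assoc_mult_mat_dims mult_add_distrib_mat_dims add_mult_distrib_mat_dims
  minus_mat_eq_add_smult uminus_mat_eq_smult mult_smult_assoc_mat_dims mult_smult_distrib_dims
  smult_smult_mat smult_add_distrib_mat_dims left_mult_one_mat_dims right_mult_one_mat_dims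

lemmas mat_vec_normalize =
  one_smult_vec assoc_mult_mat_vec_dims mult_add_distrib_mat_vec_dims add_mult_distrib_mat_vec_dims
  minus_vec_eq_add_smult uminus_vec_eq_smult smult_mat_mult_vec_dims mult_mat_vec_smult_dims
  smult_smult_assoc smult_add_distrib_vec_dims one_mult_mat_vec_dims

lemmas mat_dim_simps = index_mult_mat(2,3) index_add_mat(2,3) index_minus_mat(2,3)
  index_smult_mat(2,3) index_uminus_mat(2,3) index_one_mat(2,3) dim_mult_mat_vec

lemmas vec_dim_simps = index_add_vec(2) index_minus_vec(2) index_smult_vec(2) index_uminus_vec(2)
  dim_mult_mat_vec

lemmas mat_index_simps = index_add_mat(1) index_minus_mat(1) index_smult_mat(1) index_uminus_mat(1)

lemmas vec_index_simps = index_add_vec(1) index_minus_vec(1) index_smult_vec(1) index_uminus_vec(1)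

lemma mat_eq_by_entries:
  "dim_row A = dim_row B \<Longrightarrow> dim_col A = dim_col B \<Longrightarrow>
   (\<And>i j. i < dim_row B \<Longrightarrow> j < dim_col B \<Longrightarrow> A $$ (i,j) = B $$ (i,j)) \<Longrightarrow> A = B"
  by (rule eq_matI) auto

lemma vec_eq_by_entries:
  "dim_vec v = dim_vec w \<Longrightarrow> (\<And>i. i < dim_vec w \<Longrightarrow> v $ i = w $ i) \<Longrightarrow> v = w"
  by (rule eq_vecI) auto

lemma index_mult_mat_sum:
  "i < dim_row A \<Longrightarrow> j < dim_col B \<Longrightarrow> dim_col A = dim_row B \<Longrightarrow>
   (A * B) $$ (i,j) = (\<Sum>k\<in>{0..<dim_col A}. A $$ (i,k) * B $$ (k,j))"
  by (simp add: scalar_prod_def)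

lemma index_mult_mat_vec_sum:
  "i < dim_row A \<Longrightarrow> dim_col A = dim_vec v \<Longrightarrow>
   (A *\<^sub>v v) $ i = (\<Sum>k\<in>{0..<dim_col A}. A $$ (i,k) * v $ k)"
  by (simp add: scalar_prod_def)

lemma adj_dims [simp]: "dim_row (adj A) = dim_col A" "dim_col (adj A) = dim_row A"
  by (auto simp: adj_def)

lemma adj_index [simp]: "i < dim_col A \<Longrightarrow> j < dim_row A \<Longrightarrow> adj A $$ (i,j) = cnj (A $$ (j,i))"
  by (auto simp: adj_def)

lemma adj_add: "dim_row A = dim_row B \<Longrightarrow> dim_col A = dim_col B \<Longrightarrow> adj (A + B) = adj A + adj B"
  by (rule eq_matI) (auto simp: adj_def)

lemma adj_minus: "dim_row A = dim_row B \<Longrightarrow> dim_col A = dim_col B \<Longrightarrow> adj (A - B) = adj A - adj B"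
  by (rule eq_matI) (auto simp: adj_def)

lemma adj_smult: "adj (c \<cdot>\<^sub>m A) = cnj c \<cdot>\<^sub>m adj A"
  by (rule eq_matI) (auto simp: adj_def)

lemma adj_mult: assumes "dim_col A = dim_row B" shows "adj (A * B) = adj B * adj A"
proof (rule eq_matI)
  fix i j assume "i < dim_row (adj B * adj A)" and "j < dim_col (adj B * adj A)"
  then have i: "i < dim_col B" and j: "j < dim_row A" by auto
  have "adj (A * B) $$ (i,j) = cnj ((A * B) $$ (j,i))"
    using i j by (simp del: index_mult_mat add: mat_dim_simps)
  also have "\<dots> = cnj (\<Sum>k\<in>{0..<dim_col A}. A $$ (j,k) * B $$ (k,i))"
    using i j assms by (simp add: index_mult_mat_sum del: index_mult_mat)
  also have "\<dots> = (\<Sum>k\<in>{0..<dim_col A}. adj B $$ (i,k) * adj A $$ (k,j))"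
    using i j assms by (simp add: mult.commute)
  also have "\<dots> = (adj B * adj A) $$ (i,j)" using i j assms by (subst index_mult_mat_sum) auto
  finally show "adj (A * B) $$ (i,j) = (adj B * adj A) $$ (i,j)" .
qed auto

lemma mat_diag_dims [simp]: "dim_row (mat_diag n f) = n" "dim_col (mat_diag n f) = n"
  by (auto simp: mat_diag_def)

lemma smult_mat_diag: "c \<cdot>\<^sub>m mat_diag n f = mat_diag n (\<lambda>i. c * (f i :: 'a::comm_ring_1))"
  by (rule eq_matI) (auto simp: mat_diag_def)

lemma adj_mat_diag: "adj (mat_diag n f) = mat_diag n (\<lambda>i. cnj (f i))"
  by (rule eq_matI) (auto simp: mat_diag_def)

lemma mat_diag_mult_vec: "dim_vec v = n \<Longrightarrow> mat_diag n f *\<^sub>v v = vec n (\<lambda>i. f i * v $ i)"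
proof (rule eq_vecI)
  fix i assume v: "dim_vec v = n" and "i < dim_vec (vec n (\<lambda>i. f i * v $ i))"
  then have i: "i < n" by simp
  have "(mat_diag n f *\<^sub>v v) $ i = (\<Sum>k\<in>{0..<n}. (if i = k then f k else 0) * v $ k)"
    using i v by (simp add: mat_diag_def scalar_prod_def)
  also have "\<dots> = (\<Sum>k\<in>{0..<n}. if k = i then f i * v $ i else 0)" by (intro sum.cong) auto
  also have "\<dots> = f i * v $ i" using i by simp
  finally show "(mat_diag n f *\<^sub>v v) $ i = vec n (\<lambda>i. f i * v $ i) $ i" using i by simp
qed auto

section \<open>The algebra of the dressing transformation\<close>

locale dressing_algebra =
  fixes m n :: nat and s L Q Y M Mi D Dc :: "complex mat" and lam :: complex and Phi Om :: "complex vec"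
  assumes dims: "dim_row s = m" "dim_col s = m" "dim_row L = m" "dim_col L = m"
    "dim_row Q = m" "dim_col Q = m" "dim_row Y = m" "dim_col Y = n"
    "dim_row M = n" "dim_col M = n" "dim_row Mi = n" "dim_col Mi = n"
    "dim_row D = n" "dim_col D = n" "dim_row Dc = n" "dim_col Dc = n" "dim_vec Phi = m" "dim_vec Om = n"
  and s_squared: "s * s = 1\<^sub>m m"
  and s_L_commute: "s * L = L * s"
  and Q_s_anticommute: "Q * s = - (s * Q)"
  and adj_s: "adj s = s"
  and adj_D: "adj D = Dc"
  and adj_Q_L: "adj Q * L = L * Q"
  and sylvester: "adj Y * L * Y = \<i> \<cdot>\<^sub>m (M * D - Dc * M)"
  and sylvester_vec: "adj Y *\<^sub>v (L *\<^sub>v Phi) = \<i> \<cdot>\<^sub>v (lam \<cdot>\<^sub>v Om - Dc *\<^sub>v Om)"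
  and M_Mi: "M * Mi = 1\<^sub>m n"
  and Mi_M: "Mi * M = 1\<^sub>m n"
begin

text \<open>With Y the matrix of the seed solutions at the spectral parameters D and the Lax matrix
  \<open>U = \<i>\<lambda>s + \<i>Q\<close>, these are the x-derivatives of Y, M, Omega and of
  P; the dressed potential is Qn.\<close>

definition Yx :: "complex mat" where "Yx = s * Y * (\<i> \<cdot>\<^sub>m D) + (\<i> \<cdot>\<^sub>m Q) * Y"
definition Mx :: "complex mat" where "Mx = adj Y * (L * s) * Y"
definition Omx :: "complex vec" where "Omx = adj Y *\<^sub>v ((L * s) *\<^sub>v Phi)"
definition P :: "complex mat" where "P = Y * Mi * adj Y * L"
definition Px :: "complex mat" where "Px = ((Yx * Mi + Y * (- (Mi * Mx * Mi))) * adj Y + Y * Mi * adj Yx) * L"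
definition Qn :: "complex mat" where "Qn = Q - \<i> \<cdot>\<^sub>m (s * P - P * s)"

text \<open>The t-derivatives, for the Lax matrix \<open>V = \<i>\<lambda>\<^sup>2s + \<i>\<lambda>Q - C\<close>, where Qx is the x-derivative of Q.\<close>

definition C :: "complex mat \<Rightarrow> complex mat" where "C Qx = (1/2) \<cdot>\<^sub>m (\<i> \<cdot>\<^sub>m (s * (Q * Q)) - s * Qx)"
definition Yt :: "complex mat \<Rightarrow> complex mat" where
  "Yt Qx = s * Y * (\<i> \<cdot>\<^sub>m (D * D)) + Q * Y * (\<i> \<cdot>\<^sub>m D) - C Qx * Y"
definition Mt :: "complex mat" where
  "Mt = adj Y * (L * s) * Y * D + Dc * (adj Y * (L * s) * Y) + adj Y * (L * Q) * Y"
definition Omt :: "complex vec" where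
  "Omt = lam \<cdot>\<^sub>v (adj Y *\<^sub>v ((L * s) *\<^sub>v Phi)) + Dc *\<^sub>v (adj Y *\<^sub>v ((L * s) *\<^sub>v Phi))
     + adj Y *\<^sub>v ((L * Q) *\<^sub>v Phi)"

lemma sylvester_mult_vec:
  "dim_vec w = n \<Longrightarrow> adj Y *\<^sub>v (L *\<^sub>v (Y *\<^sub>v w)) = \<i> \<cdot>\<^sub>v (M *\<^sub>v (D *\<^sub>v w)) + (-\<i>) \<cdot>\<^sub>v (Dc *\<^sub>v (M *\<^sub>v w))"
proof -
  assume w: "dim_vec w = n"
  then have "adj Y *\<^sub>v (L *\<^sub>v (Y *\<^sub>v w)) = (adj Y * L * Y) *\<^sub>v w"
    by (simp add: dims mat_vec_normalize mat_dim_simps)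
  also have "\<dots> = \<i> \<cdot>\<^sub>v (M *\<^sub>v (D *\<^sub>v w)) + (-\<i>) \<cdot>\<^sub>v (Dc *\<^sub>v (M *\<^sub>v w))"
    unfolding sylvester using w by (simp add: dims mat_vec_normalize mat_normalize mat_dim_simps)
  finally show ?thesis .
qed

lemma sylvester_vec_normalized: "adj Y *\<^sub>v (L *\<^sub>v Phi) = (\<i> * lam) \<cdot>\<^sub>v Om + (-\<i>) \<cdot>\<^sub>v (Dc *\<^sub>v Om)"
  unfolding sylvester_vec by (simp add: dims mat_vec_normalize vec_dim_simps)

lemma M_Mi_mult_vec: "dim_vec w = n \<Longrightarrow> M *\<^sub>v (Mi *\<^sub>v w) = w"
  and Mi_M_mult_vec: "dim_vec w = n \<Longrightarrow> Mi *\<^sub>v (M *\<^sub>v w) = w"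
  by (simp_all add: dims mat_vec_normalize mat_dim_simps M_Mi Mi_M flip: assoc_mult_mat_vec_dims)

lemma s_L_mult_vec: "dim_vec w = m \<Longrightarrow> s *\<^sub>v (L *\<^sub>v w) = L *\<^sub>v (s *\<^sub>v w)"
  by (simp add: dims mat_vec_normalize mat_dim_simps s_L_commute flip: assoc_mult_mat_vec_dims)

lemma s_s_mult_vec: "dim_vec w = m \<Longrightarrow> s *\<^sub>v (s *\<^sub>v w) = w"
  by (simp add: dims mat_vec_normalize mat_dim_simps s_squared flip: assoc_mult_mat_vec_dims)

lemma M_Mi_mult: "dim_row X = n \<Longrightarrow> M * (Mi * X) = X"
  and Mi_M_mult: "dim_row X = n \<Longrightarrow> Mi * (M * X) = X"
  by (simp_all add: dims mat_dim_simps M_Mi Mi_M left_mult_one_mat_dims flip: assoc_mult_mat_dims)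

lemma s_s_mult: "dim_row X = m \<Longrightarrow> s * (s * X) = X"
  by (simp add: dims mat_dim_simps s_squared left_mult_one_mat_dims flip: assoc_mult_mat_dims)

lemma Q_s_mult: "dim_row X = m \<Longrightarrow> Q * (s * X) = (-1) \<cdot>\<^sub>m (s * (Q * X))"
  by (simp add: dims mat_dim_simps Q_s_anticommute mat_normalize flip: assoc_mult_mat_dims)

lemma Q_s_anticommute_smult: "Q * s = (-1) \<cdot>\<^sub>m (s * Q)"
  by (simp add: Q_s_anticommute uminus_mat_eq_smult)

lemma s_L_mult: "dim_row X = m \<Longrightarrow> s * (L * X) = L * (s * X)"
  by (simp add: dims mat_dim_simps s_L_commute flip: assoc_mult_mat_dims)

text \<open>Conjugating the Sylvester equation by Mi expresses D Mi through Dc; this is how D, which does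
  not occur in the dressed Lax matrices, is eliminated.\<close>

lemma D_Mi_mult:
  assumes X: "dim_row X = n"
  shows "D * (Mi * X) = Mi * (Dc * X) + (-\<i>) \<cdot>\<^sub>m (Mi * (adj Y * (L * (Y * (Mi * X)))))"
proof -
  have "Mi * (adj Y * L * Y) * Mi * X = \<i> \<cdot>\<^sub>m (Mi * (M * D - Dc * M) * Mi * X)"
    unfolding sylvester using X by (simp add: dims mat_normalize mat_dim_simps)
  also have "\<dots> = \<i> \<cdot>\<^sub>m (D * (Mi * X)) + (-\<i>) \<cdot>\<^sub>m (Mi * (Dc * X))"
    using X by (simp add: dims mat_normalize mat_dim_simps M_Mi_mult Mi_M_mult)
  finally have "(-\<i>) \<cdot>\<^sub>m (Mi * (adj Y * L * Y) * Mi * X) = D * (Mi * X) + (-1) \<cdot>\<^sub>m (Mi * (Dc * X))"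
    using X by (simp add: dims mat_normalize mat_dim_simps)
  then show ?thesis using X
    apply (simp add: dims mat_normalize mat_dim_simps)
    apply (rule mat_eq_by_entries)
      apply (simp_all only: dims mat_dim_simps adj_dims)
    apply (drule_tac f="\<lambda>A. A $$ (i,j)" in arg_cong)
    apply (simp only: dims mat_dim_simps mat_index_simps adj_dims)
    apply (simp add: algebra_simps del: index_mult_mat)
    done
qed

lemma adj_Yx_L: "adj Yx * L = (-\<i>) \<cdot>\<^sub>m (Dc * adj Y * L * s) + (-\<i>) \<cdot>\<^sub>m (adj Y * L * Q)"
  unfolding Yx_def
  by (simp only: dims mat_normalize mat_dim_simps adj_dims adj_add adj_smult adj_mult adj_s adj_D
      s_L_mult s_L_commute adj_Q_L)
    (simp add: dims mat_normalize mat_dim_simps flip: assoc_mult_mat_dims)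

lemma Yx_dims: "dim_row Yx = m" "dim_col Yx = n"
  by (simp_all add: Yx_def dims)

lemma adj_Yx_L_mult: "dim_row X = m \<Longrightarrow>
    adj Yx * (L * X) = (-\<i>) \<cdot>\<^sub>m (Dc * (adj Y * (L * (s * X)))) + (-\<i>) \<cdot>\<^sub>m (adj Y * (L * (Q * X)))"
  by (simp add: dims Yx_dims mat_dim_simps mat_normalize adj_Yx_L flip: assoc_mult_mat_dims[of "adj Yx"])

lemma adj_Yx_L_normalized: "adj Yx * L = (-\<i>) \<cdot>\<^sub>m (Dc * (adj Y * (L * s))) + (-\<i>) \<cdot>\<^sub>m (adj Y * (L * Q))"
  unfolding adj_Yx_L by (simp add: dims mat_dim_simps mat_normalize)

lemma adj_Yx_L_mult_vec: "dim_vec w = m \<Longrightarrow>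
    adj Yx *\<^sub>v (L *\<^sub>v w) = (-\<i>) \<cdot>\<^sub>v (Dc *\<^sub>v (adj Y *\<^sub>v (L *\<^sub>v (s *\<^sub>v w))))
      + (-\<i>) \<cdot>\<^sub>v (adj Y *\<^sub>v (L *\<^sub>v (Q *\<^sub>v w)))"
proof -
  assume w: "dim_vec w = m"
  have "adj Yx *\<^sub>v (L *\<^sub>v w) = (adj Yx * L) *\<^sub>v w"
    using w by (simp add: dims mat_dim_simps assoc_mult_mat_vec_dims Yx_dims)
  then show ?thesis
    unfolding adj_Yx_L using w by (simp add: dims mat_dim_simps mat_normalize mat_vec_normalize)
qed

lemma dressed_x_equation:
  "((\<i> * lam) \<cdot>\<^sub>m s + \<i> \<cdot>\<^sub>m Q) *\<^sub>v Phi - (Yx *\<^sub>v (Mi *\<^sub>v Om) + Y *\<^sub>v ((- (Mi * Mx * Mi)) *\<^sub>v Om + Mi *\<^sub>v Omx))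
   = ((\<i> * lam) \<cdot>\<^sub>m s + \<i> \<cdot>\<^sub>m Qn) *\<^sub>v (Phi - Y *\<^sub>v (Mi *\<^sub>v Om))"
  unfolding Yx_def Mx_def Omx_def Qn_def P_def
  apply (simp only: dims mat_vec_normalize mat_normalize mat_dim_simps vec_dim_simps adj_dims
      sylvester_mult_vec sylvester_vec_normalized M_Mi_mult_vec Mi_M_mult_vec s_L_mult_vec)
  apply (rule vec_eq_by_entries)
   apply (simp_all only: dims mat_dim_simps vec_dim_simps adj_dims)
  apply (simp only: dims mat_dim_simps vec_dim_simps vec_index_simps adj_dims)
  apply (simp add: algebra_simps del: index_mult_mat index_mult_mat_vec)
  done

lemma Qn_squared: "Qn * Qn = Q * Q + s * Px + Px * s"
  unfolding Px_def Qn_def P_def Mx_def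
  apply (simp only: dims Yx_dims mat_normalize mat_dim_simps adj_dims adj_Yx_L_mult adj_Yx_L_normalized)
  apply (simp only: dims mat_normalize mat_dim_simps adj_dims s_s_mult s_squared Q_s_mult Q_s_anticommute_smult
      s_L_mult s_L_commute D_Mi_mult Yx_def)
  apply (rule mat_eq_by_entries)
    apply (simp_all only: dims mat_dim_simps adj_dims)
  apply (simp only: dims mat_dim_simps mat_index_simps adj_dims)
  apply (simp add: algebra_simps del: index_mult_mat)
  done

lemma dressed_t_equation:
  assumes Qx: "dim_row Qx = m" "dim_col Qx = m"
  shows "((\<i> * lam^2) \<cdot>\<^sub>m s + (\<i> * lam) \<cdot>\<^sub>m Q - C Qx) *\<^sub>v Phi
      - (Yt Qx *\<^sub>v (Mi *\<^sub>v Om) + Y *\<^sub>v ((- (Mi * Mt * Mi)) *\<^sub>v Om + Mi *\<^sub>v Omt))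
   = ((\<i> * lam^2) \<cdot>\<^sub>m s + (\<i> * lam) \<cdot>\<^sub>m Qn
       - (1/2) \<cdot>\<^sub>m (\<i> \<cdot>\<^sub>m (s * (Qn * Qn)) - s * (Qx - \<i> \<cdot>\<^sub>m (s * Px - Px * s))))
     *\<^sub>v (Phi - Y *\<^sub>v (Mi *\<^sub>v Om))"
  unfolding Qn_squared
  unfolding Px_def Qn_def P_def C_def Yt_def Mt_def Omt_def Mx_def
  apply (simp only: dims Yx_dims Qx mat_normalize mat_dim_simps mat_vec_normalize vec_dim_simps adj_dims
      adj_Yx_L_mult_vec)
  apply (simp only: dims Qx mat_normalize mat_dim_simps mat_vec_normalize vec_dim_simps adj_dims
      sylvester_mult_vec sylvester_vec_normalized M_Mi_mult_vec Mi_M_mult_vec s_L_mult_vec s_s_mult_vec Yx_def)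
  apply (rule vec_eq_by_entries)
   apply (simp_all only: dims Qx mat_dim_simps vec_dim_simps adj_dims)
  apply (simp only: dims Qx mat_dim_simps vec_dim_simps vec_index_simps adj_dims)
  apply (simp add: algebra_simps power2_eq_square del: index_mult_mat index_mult_mat_vec)
  done

end

section \<open>Derivatives of matrix- and vector-valued functions of one real variable\<close>

definition has_mat_derivative :: "(real \<Rightarrow> complex mat) \<Rightarrow> complex mat \<Rightarrow> real \<Rightarrow> bool" where
  "has_mat_derivative F F' x \<longleftrightarrow> (\<forall>y. dim_row (F y) = dim_row F' \<and> dim_col (F y) = dim_col F') \<and>
    (\<forall>i<dim_row F'. \<forall>j<dim_col F'. ((\<lambda>y. F y $$ (i,j)) has_vector_derivative F' $$ (i,j)) (at x))"

definition has_vec_derivative :: "(real \<Rightarrow> complex vec) \<Rightarrow> complex vec \<Rightarrow> real \<Rightarrow> bool" where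
  "has_vec_derivative F F' x \<longleftrightarrow> (\<forall>y. dim_vec (F y) = dim_vec F') \<and>
    (\<forall>i<dim_vec F'. ((\<lambda>y. F y $ i) has_vector_derivative F' $ i) (at x))"

lemma has_mat_derivative_dims:
  "has_mat_derivative F F' x \<Longrightarrow> dim_row (F y) = dim_row F'"
  "has_mat_derivative F F' x \<Longrightarrow> dim_col (F y) = dim_col F'"
  by (auto simp: has_mat_derivative_def)

lemma has_vec_derivative_dim: "has_vec_derivative F F' x \<Longrightarrow> dim_vec (F y) = dim_vec F'"
  by (auto simp: has_vec_derivative_def)

lemma has_mat_derivative_unique: "has_mat_derivative F A x \<Longrightarrow> has_mat_derivative F B x \<Longrightarrow> A = B"
  unfolding has_mat_derivative_def by (rule eq_matI) (metis vector_derivative_unique_at)+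

lemma has_mat_derivative_const: "has_mat_derivative (\<lambda>y. C) (0\<^sub>m (dim_row C) (dim_col C)) x"
  unfolding has_mat_derivative_def by auto

lemma has_mat_derivative_diff:
  "has_mat_derivative F F' x \<Longrightarrow> has_mat_derivative G G' x \<Longrightarrow>
   dim_row F' = dim_row G' \<Longrightarrow> dim_col F' = dim_col G' \<Longrightarrow>
   has_mat_derivative (\<lambda>y. F y - G y) (F' - G') x"
  unfolding has_mat_derivative_def by (auto intro!: has_vector_derivative_diff)

lemma has_mat_derivative_smult:
  "has_mat_derivative F F' x \<Longrightarrow> has_mat_derivative (\<lambda>y. c \<cdot>\<^sub>m F y) (c \<cdot>\<^sub>m F') x"
  unfolding has_mat_derivative_def by (auto intro!: has_vector_derivative_mult_right)

lemma has_mat_derivative_adj: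
  "has_mat_derivative F F' x \<Longrightarrow> has_mat_derivative (\<lambda>y. adj (F y)) (adj F') x"
  unfolding has_mat_derivative_def by (auto intro!: has_vector_derivative_cnj)

lemma has_vec_derivative_diff:
  "has_vec_derivative F F' x \<Longrightarrow> has_vec_derivative G G' x \<Longrightarrow> dim_vec F' = dim_vec G' \<Longrightarrow>
   has_vec_derivative (\<lambda>y. F y - G y) (F' - G') x"
  unfolding has_vec_derivative_def by (auto intro!: has_vector_derivative_diff)

lemma has_mat_derivative_mult:
  assumes F: "has_mat_derivative F F' x" and G: "has_mat_derivative G G' x"
    and d: "dim_col F' = dim_row G'"
  shows "has_mat_derivative (\<lambda>y. F y * G y) (F' * G x + F x * G') x"
  unfolding has_mat_derivative_def
proof (intro conjI allI impI)
  note dF = has_mat_derivative_dims[OF F] and dG = has_mat_derivative_dims[OF G]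
  fix y show "dim_row (F y * G y) = dim_row (F' * G x + F x * G')"
    "dim_col (F y * G y) = dim_col (F' * G x + F x * G')"
    using dF dG by auto
next
  note dF = has_mat_derivative_dims[OF F] and dG = has_mat_derivative_dims[OF G]
  fix i j assume "i < dim_row (F' * G x + F x * G')" and "j < dim_col (F' * G x + F x * G')"
  then have i: "i < dim_row F'" and j: "j < dim_col G'" using dF dG by auto
  have e: "(\<lambda>y. (F y * G y) $$ (i,j)) = (\<lambda>y. \<Sum>k\<in>{0..<dim_col F'}. F y $$ (i,k) * G y $$ (k,j))"
    using dF dG i j d by (intro ext, subst index_mult_mat_sum) auto
  have r: "(F' * G x + F x * G') $$ (i,j)
      = (\<Sum>k\<in>{0..<dim_col F'}. F x $$ (i,k) * G' $$ (k,j) + F' $$ (i,k) * G x $$ (k,j))"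
    using dF dG i j d by (auto simp: scalar_prod_def sum.distrib add.commute)
  show "((\<lambda>y. (F y * G y) $$ (i,j)) has_vector_derivative (F' * G x + F x * G') $$ (i,j)) (at x)"
    unfolding e r using F G i j d
    by (intro has_vector_derivative_sum has_vector_derivative_mult) (auto simp: has_mat_derivative_def)
qed

lemma has_mat_derivative_const_mult:
  assumes F: "has_mat_derivative F F' x" and d: "dim_col C = dim_row F'"
  shows "has_mat_derivative (\<lambda>y. C * F y) (C * F') x"
proof -
  have "has_mat_derivative (\<lambda>y. C * F y) (0\<^sub>m (dim_row C) (dim_col C) * F x + C * F') x"
    by (rule has_mat_derivative_mult[OF has_mat_derivative_const F]) (simp add: d)
  moreover have "0\<^sub>m (dim_row C) (dim_col C) * F x + C * F' = C * F'"
    using d has_mat_derivative_dims[OF F] by (intro eq_matI) auto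
  ultimately show ?thesis by simp
qed

lemma has_mat_derivative_mult_const:
  assumes F: "has_mat_derivative F F' x" and d: "dim_col F' = dim_row C"
  shows "has_mat_derivative (\<lambda>y. F y * C) (F' * C) x"
proof -
  have "has_mat_derivative (\<lambda>y. F y * C) (F' * C + F x * 0\<^sub>m (dim_row C) (dim_col C)) x"
    by (rule has_mat_derivative_mult[OF F has_mat_derivative_const]) (simp add: d)
  moreover have "F' * C + F x * 0\<^sub>m (dim_row C) (dim_col C) = F' * C"
    using d has_mat_derivative_dims[OF F] by (intro eq_matI) auto
  ultimately show ?thesis by simp
qed

lemma has_mat_derivative_mult_vec:
  assumes F: "has_mat_derivative F F' x" and G: "has_vec_derivative G G' x"
    and d: "dim_col F' = dim_vec G'"
  shows "has_vec_derivative (\<lambda>y. F y *\<^sub>v G y) (F' *\<^sub>v G x + F x *\<^sub>v G') x"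
  unfolding has_vec_derivative_def
proof (intro conjI allI impI)
  note dF = has_mat_derivative_dims[OF F] and dG = has_vec_derivative_dim[OF G]
  fix y show "dim_vec (F y *\<^sub>v G y) = dim_vec (F' *\<^sub>v G x + F x *\<^sub>v G')"
    using dF dG by auto
next
  note dF = has_mat_derivative_dims[OF F] and dG = has_vec_derivative_dim[OF G]
  fix i assume "i < dim_vec (F' *\<^sub>v G x + F x *\<^sub>v G')"
  then have i: "i < dim_row F'" using dF by auto
  have e: "(\<lambda>y. (F y *\<^sub>v G y) $ i) = (\<lambda>y. \<Sum>k\<in>{0..<dim_col F'}. F y $$ (i,k) * G y $ k)"
    using dF dG i d by (intro ext, subst index_mult_mat_vec_sum) auto
  have r: "(F' *\<^sub>v G x + F x *\<^sub>v G') $ i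
      = (\<Sum>k\<in>{0..<dim_col F'}. F x $$ (i,k) * G' $ k + F' $$ (i,k) * G x $ k)"
    using dF dG i d by (auto simp: scalar_prod_def sum.distrib add.commute)
  show "((\<lambda>y. (F y *\<^sub>v G y) $ i) has_vector_derivative (F' *\<^sub>v G x + F x *\<^sub>v G') $ i) (at x)"
    unfolding e r using F G i d
    by (intro has_vector_derivative_sum has_vector_derivative_mult)
      (auto simp: has_mat_derivative_def has_vec_derivative_def)
qed

lemma has_vec_derivative_const_mult:
  assumes G: "has_vec_derivative G G' x" and d: "dim_col C = dim_vec G'"
  shows "has_vec_derivative (\<lambda>y. C *\<^sub>v G y) (C *\<^sub>v G') x"
proof -
  have "has_vec_derivative (\<lambda>y. C *\<^sub>v G y) (0\<^sub>m (dim_row C) (dim_col C) *\<^sub>v G x + C *\<^sub>v G') x"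
    by (rule has_mat_derivative_mult_vec[OF has_mat_derivative_const G]) (simp add: d)
  moreover have "0\<^sub>m (dim_row C) (dim_col C) *\<^sub>v G x + C *\<^sub>v G' = C *\<^sub>v G'"
    using d has_vec_derivative_dim[OF G] by (intro eq_vecI) (auto simp: scalar_prod_def)
  ultimately show ?thesis by simp
qed

lemma invertible_minv:
  assumes A: "A \<in> carrier_mat n n" and inv: "invertible_mat (A::complex mat)"
  shows "minv A * A = 1\<^sub>m n" "A * minv A = 1\<^sub>m n" "minv A \<in> carrier_mat n n" "det A \<noteq> 0"
proof -
  obtain B where AB: "A * B = 1\<^sub>m n" and BA: "B * A = 1\<^sub>m (dim_row B)"
    using inv A unfolding invertible_mat_def inverts_mat_def by auto
  have "dim_col B = n" "dim_row B = n" using arg_cong[OF AB, of dim_col] arg_cong[OF BA, of dim_col] A by auto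
  then have U: "A \<in> Units (ring_mat TYPE(complex) n ())"
    unfolding Units_def ring_mat_simps using A AB BA by auto
  show "det A \<noteq> 0" by (rule unit_imp_det_non_zero[OF U])
  obtain C where C: "mat_inverse A = Some C" using mat_inverse(1)[OF A, of "()"] U by fastforce
  then show "minv A * A = 1\<^sub>m n" "A * minv A = 1\<^sub>m n" "minv A \<in> carrier_mat n n"
    using mat_inverse(2)[OF A C] by (auto simp: minv_def)
qed

lemma minv_eq_adj_mat:
  assumes A: "A \<in> carrier_mat n n" and inv: "invertible_mat (A::complex mat)"
  shows "minv A = (1 / det A) \<cdot>\<^sub>m adj_mat A"
proof -
  note ip = invertible_minv[OF A inv]
  have adj: "adj_mat A \<in> carrier_mat n n" "adj_mat A * A = det A \<cdot>\<^sub>m 1\<^sub>m n" using adj_mat[OF A] by auto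
  let ?B = "(1 / det A) \<cdot>\<^sub>m adj_mat A"
  have BA: "?B * A = 1\<^sub>m n"
    using adj ip(4) A by (simp add: mult_smult_assoc_mat smult_smult_mat one_smult_mat)
  have "?B = ?B * (A * minv A)" unfolding ip(2) using adj by simp
  also have "\<dots> = (?B * A) * minv A" by (rule assoc_mult_mat[symmetric]) (use ip adj A in auto)
  also have "\<dots> = minv A" using BA ip by simp
  finally show ?thesis by simp
qed

lemma differentiable_prod:
  fixes f :: "'i \<Rightarrow> real \<Rightarrow> complex"
  shows "finite S \<Longrightarrow> (\<And>i. i \<in> S \<Longrightarrow> f i differentiable (at x)) \<Longrightarrow> (\<lambda>y. \<Prod>i\<in>S. f i y) differentiable (at x)"
  by (induction S rule: finite_induct) (simp_all add: differentiable_mult)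

lemma det_differentiable:
  fixes G :: "real \<Rightarrow> complex mat"
  assumes dims: "\<And>y. G y \<in> carrier_mat m m"
    and ent: "\<And>i j. i < m \<Longrightarrow> j < m \<Longrightarrow> (\<lambda>y. G y $$ (i,j)) differentiable (at x)"
  shows "(\<lambda>y. det (G y)) differentiable (at x)"
proof -
  have "(\<lambda>y. det (G y)) = (\<lambda>y. \<Sum>p\<in>{p. p permutes {0..<m}}. signof p * (\<Prod>i = 0..<m. G y $$ (i, p i)))"
    using dims by (intro ext) (rule det_def')
  then show ?thesis
    by (auto intro!: differentiable_sum differentiable_mult differentiable_prod ent
        simp: finite_permutations permutes_in_image)
qed

lemma minv_entry_differentiable:
  fixes F :: "real \<Rightarrow> complex mat"
  assumes dims: "\<And>y. F y \<in> carrier_mat n n" and inv: "\<And>y. invertible_mat (F y)"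
    and ent: "\<And>i j. i < n \<Longrightarrow> j < n \<Longrightarrow> (\<lambda>y. F y $$ (i,j)) differentiable (at x)"
    and ij: "i < n" "j < n"
  shows "(\<lambda>y. minv (F y) $$ (i,j)) differentiable (at x)"
proof -
  have cofactor: "(\<lambda>y. minv (F y) $$ (i,j)) = (\<lambda>y. (1 / det (F y)) * ((-1)^(j+i) * det (mat_delete (F y) j i)))"
    using ij by (intro ext) (simp add: minv_eq_adj_mat[OF dims inv] adj_mat_def cofactor_def carrier_matD[OF dims])
  have "(\<lambda>y. det (mat_delete (F y) j i)) differentiable (at x)"
  proof (rule det_differentiable[where m="n-1"])
    fix a b assume ab: "a < n - 1" "b < n - 1"
    have "(\<lambda>y. mat_delete (F y) j i $$ (a,b))
        = (\<lambda>y. F y $$ (if a < j then a else Suc a, if b < i then b else Suc b))"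
      using ab by (intro ext) (simp add: mat_delete_def carrier_matD[OF dims])
    with ab ent show "(\<lambda>y. mat_delete (F y) j i $$ (a,b)) differentiable (at x)" by simp
  qed (rule mat_delete_carrier[OF dims])
  then show ?thesis
    unfolding cofactor using det_differentiable[OF dims ent] invertible_minv(4)[OF dims inv]
    by (auto intro!: differentiable_mult differentiable_divide)
qed

text \<open>Differentiability of the entries of the inverse comes from the cofactor formula; the value
  of the derivative then follows by differentiating \<open>minv F * F = 1\<close>.\<close>

lemma has_mat_derivative_minv:
  assumes F: "has_mat_derivative F F' x" and dims: "\<And>y. F y \<in> carrier_mat n n"
    and inv: "\<And>y. invertible_mat (F y)"
  shows "has_mat_derivative (\<lambda>y. minv (F y)) (- (minv (F x) * F' * minv (F x))) x"
proof -
  note ip = invertible_minv[OF dims inv, of x]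
  have dF': "F' \<in> carrier_mat n n"
    using has_mat_derivative_dims[OF F] dims by (metis carrier_matD carrier_matI)
  have ent: "(\<lambda>y. F y $$ (i,j)) differentiable (at x)" if "i < n" "j < n" for i j
    using F that dF' unfolding has_mat_derivative_def by (auto intro: differentiableI_vector)
  define G' where "G' = mat n n (\<lambda>(i,j). vector_derivative (\<lambda>y. minv (F y) $$ (i,j)) (at x))"
  have G': "has_mat_derivative (\<lambda>y. minv (F y)) G' x"
    unfolding has_mat_derivative_def G'_def
    using invertible_minv(3)[OF dims inv] minv_entry_differentiable[OF dims inv ent]
    by (auto simp: vector_derivative_works[symmetric])
  have dG': "G' \<in> carrier_mat n n" unfolding G'_def by simp
  have "has_mat_derivative (\<lambda>y. minv (F y) * F y) (G' * F x + minv (F x) * F') x"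
    by (rule has_mat_derivative_mult[OF G' F]) (use dG' dF' in auto)
  moreover have "has_mat_derivative (\<lambda>y. minv (F y) * F y) (0\<^sub>m n n) x"
    using has_mat_derivative_const[of "1\<^sub>m n"] invertible_minv(1)[OF dims inv] by simp
  ultimately have sum0: "G' * F x + minv (F x) * F' = 0\<^sub>m n n"
    by (rule has_mat_derivative_unique)
  have "G' = (G' * F x) * minv (F x)"
    using ip dG' dims[of x] by (simp add: assoc_mult_mat[of G' n n "F x" n "minv (F x)" n])
  also have "G' * F x = (G' * F x + minv (F x) * F') - minv (F x) * F'"
    using dG' dims[of x] ip dF' by (intro eq_matI) auto
  also have "\<dots> = - (minv (F x) * F')"
    unfolding sum0 using ip dF' by (intro eq_matI) auto
  finally show ?thesis
    using G' ip dF' by (simp add: uminus_mat_eq_smult mult_smult_assoc_mat_dims)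
qed

lemma herm_add_mat:
  assumes "dim_row B = dim_row C" "dim_col B = dim_col C" "dim_col C = dim_vec v" "dim_vec u = dim_row C"
  shows "herm u (B + C) v = herm u B v + herm u C v"
proof -
  have "(B + C) *\<^sub>v v = B *\<^sub>v v + C *\<^sub>v v" by (rule add_mult_distrib_mat_vec_dims) (use assms in auto)
  then show ?thesis unfolding herm_def sum.distrib[symmetric] using assms
    by (intro sum.cong) (auto simp: algebra_simps simp del: index_mult_mat_vec)
qed

lemma herm_smult_mat:
  "dim_col B = dim_vec v \<Longrightarrow> dim_vec u = dim_row B \<Longrightarrow> herm u (c \<cdot>\<^sub>m B) v = c * herm u B v"
  unfolding herm_def by (simp add: smult_mat_mult_vec_dims sum_distrib_left algebra_simps)

lemma herm_mult_vec_right: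
  "dim_col B = dim_row A \<Longrightarrow> dim_col A = dim_vec v \<Longrightarrow> herm u B (A *\<^sub>v v) = herm u (B * A) v"
  unfolding herm_def by (simp add: assoc_mult_mat_vec_dims)

lemma herm_mult_vec_left:
  assumes d: "A \<in> carrier_mat m m" "B \<in> carrier_mat m m" "dim_vec u = m" "dim_vec v = m"
  shows "herm (A *\<^sub>v u) B v = herm u (adj A * B) v"
proof -
  have "herm (A *\<^sub>v u) B v = (\<Sum>i<m. cnj (\<Sum>k\<in>{0..<m}. A $$ (i,k) * u $ k) * (B *\<^sub>v v) $ i)"
    unfolding herm_def using d
    by (intro sum.cong) (auto simp: index_mult_mat_vec_sum simp del: index_mult_mat_vec)
  also have "\<dots> = (\<Sum>i<m. \<Sum>k\<in>{0..<m}. cnj (u $ k) * (cnj (A $$ (i,k)) * (B *\<^sub>v v) $ i))"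
    by (simp add: sum_distrib_right mult.assoc mult.left_commute)
  also have "\<dots> = (\<Sum>k\<in>{0..<m}. \<Sum>i<m. cnj (u $ k) * (cnj (A $$ (i,k)) * (B *\<^sub>v v) $ i))"
    by (rule sum.swap)
  also have "\<dots> = (\<Sum>k<m. cnj (u $ k) * ((adj A * B) *\<^sub>v v) $ k)"
  proof (rule sum.cong)
    fix k assume k: "k \<in> {..<m}"
    have "((adj A * B) *\<^sub>v v) $ k = (\<Sum>i\<in>{0..<m}. adj A $$ (k,i) * (B *\<^sub>v v) $ i)"
      using d k by (simp add: assoc_mult_mat_vec_dims index_mult_mat_vec_sum del: index_mult_mat_vec)
    also have "\<dots> = (\<Sum>i<m. cnj (A $$ (i,k)) * (B *\<^sub>v v) $ i)" using d k by (intro sum.cong) auto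
    finally show "(\<Sum>i<m. cnj (u $ k) * (cnj (A $$ (i,k)) * (B *\<^sub>v v) $ i))
        = cnj (u $ k) * ((adj A * B) *\<^sub>v v) $ k"
      by (simp add: sum_distrib_left)
  qed auto
  also have "\<dots> = herm u (adj A * B) v" unfolding herm_def using d by simp
  finally show ?thesis .
qed

lemma has_vector_derivative_herm:
  assumes u: "has_vec_derivative u u' x" and v: "has_vec_derivative v v' x"
    and d: "dim_vec u' = dim_row A" "dim_col A = dim_vec v'"
  shows "((\<lambda>y. herm (u y) A (v y)) has_vector_derivative (herm u' A (v x) + herm (u x) A v')) (at x)"
proof -
  have Av: "has_vec_derivative (\<lambda>y. A *\<^sub>v v y) (A *\<^sub>v v') x"
    by (rule has_vec_derivative_const_mult[OF v d(2)])
  have e: "(\<lambda>y. herm (u y) A (v y)) = (\<lambda>y. \<Sum>i<dim_vec u'. cnj (u y $ i) * (A *\<^sub>v v y) $ i)"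
    unfolding herm_def has_vec_derivative_dim[OF u] ..
  have r: "herm u' A (v x) + herm (u x) A v'
      = (\<Sum>i<dim_vec u'. cnj (u x $ i) * (A *\<^sub>v v') $ i + cnj (u' $ i) * (A *\<^sub>v v x) $ i)"
    unfolding herm_def has_vec_derivative_dim[OF u] sum.distrib by simp
  show ?thesis unfolding e r using u Av d
    by (intro has_vector_derivative_sum has_vector_derivative_mult has_vector_derivative_cnj)
      (auto simp: has_vec_derivative_def)
qed

text \<open>With \<open>c = \<i>(\<lambda> - cnj \<lambda>\<^sub>1)\<close> this says that \<open>\<omega>(\<Phi>\<^sub>1, \<Phi>)\<close> is the differential of
  \<open>\<Phi>\<^sub>1\<^sup>\<dagger>\<Lambda>\<Phi> / c\<close>.\<close>

lemma has_vector_derivative_herm_div: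
  assumes u: "has_vec_derivative u (A *\<^sub>v u x) x" and v: "has_vec_derivative v (B *\<^sub>v v x) x"
    and du: "\<And>y. dim_vec (u y) = m" and dv: "\<And>y. dim_vec (v y) = m"
    and dA: "A \<in> carrier_mat m m" and dB: "B \<in> carrier_mat m m"
    and dL: "L \<in> carrier_mat m m" and dW: "W \<in> carrier_mat m m"
    and id: "adj A * L + L * B = c \<cdot>\<^sub>m W" and c: "c \<noteq> 0"
  shows "((\<lambda>y. herm (u y) L (v y) / c) has_vector_derivative herm (u x) W (v x)) (at x)"
proof -
  have "herm (A *\<^sub>v u x) L (v x) + herm (u x) L (B *\<^sub>v v x) = herm (u x) (adj A * L + L * B) (v x)"
    using dA dB dL du dv
    by (simp add: herm_mult_vec_left[where m=m] herm_mult_vec_right herm_add_mat)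
  also have "\<dots> = c * herm (u x) W (v x)" unfolding id using dW du dv by (simp add: herm_smult_mat)
  finally have "((\<lambda>y. herm (u y) L (v y)) has_vector_derivative c * herm (u x) W (v x)) (at x)"
    using has_vector_derivative_herm[OF u v, of L] dA dB dL dv by simp
  from has_vector_derivative_divide[OF this, of c] c show ?thesis by simp
qed

lemma col_mat_of_cols_map:
  assumes "\<forall>j<n. dim_vec (f j) = m" and "i < n"
  shows "col (mat_of_cols m (map f [0..<n])) i = f i"
proof -
  have "f i \<in> carrier_vec m" unfolding carrier_vec_def using assms by blast
  then show ?thesis using col_mat_of_cols[of i "map f [0..<n]" m] assms(2) by simp
qed

lemma adj_mat_of_cols_mult_mat:
  assumes f: "\<forall>j<n. dim_vec (f j) = m" and B: "B \<in> carrier_mat m m"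
  shows "adj (mat_of_cols m (map f [0..<n])) * B * mat_of_cols m (map f [0..<n])
    = mat n n (\<lambda>(i,j). herm (f i) B (f j))"
    (is "adj ?Y * B * ?Y = _")
proof (rule eq_matI)
  fix i j assume "i < dim_row (mat n n (\<lambda>(i,j). herm (f i) B (f j)))"
    "j < dim_col (mat n n (\<lambda>(i,j). herm (f i) B (f j)))"
  then have i: "i < n" and j: "j < n" by auto
  have "(adj ?Y * B * ?Y) $$ (i,j) = (adj ?Y * (B * ?Y)) $$ (i,j)"
    using B by (simp add: assoc_mult_mat_dims)
  also have "\<dots> = (\<Sum>k\<in>{0..<m}. adj ?Y $$ (i,k) * (B * ?Y) $$ (k,j))"
    using B i j by (subst index_mult_mat_sum) auto
  also have "\<dots> = (\<Sum>k<m. cnj (col ?Y i $ k) * (B *\<^sub>v col ?Y j) $ k)"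
    using B i j by (intro sum.cong) auto
  also have "\<dots> = herm (f i) B (f j)"
    unfolding herm_def using i j f by (simp add: col_mat_of_cols_map)
  finally show "(adj ?Y * B * ?Y) $$ (i,j) = mat n n (\<lambda>(i,j). herm (f i) B (f j)) $$ (i,j)"
    using i j by simp
qed auto

lemma adj_mat_of_cols_mult_vec:
  assumes f: "\<forall>j<n. dim_vec (f j) = m" and B: "B \<in> carrier_mat m m" and v: "dim_vec v = m"
  shows "adj (mat_of_cols m (map f [0..<n])) *\<^sub>v (B *\<^sub>v v) = vec n (\<lambda>i. herm (f i) B v)"
    (is "adj ?Y *\<^sub>v _ = _")
proof (rule eq_vecI)
  fix i assume "i < dim_vec (vec n (\<lambda>i. herm (f i) B v))"
  then have i: "i < n" by simp
  have "(adj ?Y *\<^sub>v (B *\<^sub>v v)) $ i = (\<Sum>k\<in>{0..<m}. adj ?Y $$ (i,k) * (B *\<^sub>v v) $ k)"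
    using B i v by (subst index_mult_mat_vec_sum) auto
  also have "\<dots> = (\<Sum>k<m. cnj (col ?Y i $ k) * (B *\<^sub>v v) $ k)"
    using B i v by (intro sum.cong) auto
  also have "\<dots> = herm (f i) B v"
    unfolding herm_def using i f by (simp add: col_mat_of_cols_map)
  finally show "(adj ?Y *\<^sub>v (B *\<^sub>v v)) $ i = vec n (\<lambda>i. herm (f i) B v) $ i"
    using i by simp
qed auto

lemma has_mat_derivative_mat_of_cols:
  assumes Pd: "\<forall>j<n. has_vec_derivative (Ps j) (Pd j) x" and dP: "\<forall>j<n. dim_vec (Pd j) = m"
  shows "has_mat_derivative (\<lambda>y. mat_of_cols m (map (\<lambda>j. Ps j y) [0..<n])) (mat_of_cols m (map Pd [0..<n])) x"
  unfolding has_mat_derivative_def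
proof (intro conjI allI impI)
  fix i j assume "i < dim_row (mat_of_cols m (map Pd [0..<n]))" "j < dim_col (mat_of_cols m (map Pd [0..<n]))"
  then have i: "i < m" and j: "j < n" by auto
  have "(\<lambda>y. mat_of_cols m (map (\<lambda>j. Ps j y) [0..<n]) $$ (i,j)) = (\<lambda>y. Ps j y $ i)"
    using i j by (intro ext) (simp add: mat_of_cols_index)
  moreover have "mat_of_cols m (map Pd [0..<n]) $$ (i,j) = Pd j $ i" using i j by (simp add: mat_of_cols_index)
  ultimately show "((\<lambda>y. mat_of_cols m (map (\<lambda>j. Ps j y) [0..<n]) $$ (i,j))
      has_vector_derivative mat_of_cols m (map Pd [0..<n]) $$ (i,j)) (at x)"
    using Pd dP i j by (auto simp: has_vec_derivative_def)
qed auto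

lemma has_mat_derivative_pairing_mat:
  fixes Ps :: "nat \<Rightarrow> real \<Rightarrow> complex vec"
  assumes Pd: "\<forall>j<n. has_vec_derivative (Ps j) (A j *\<^sub>v Ps j x) x"
    and dA: "\<forall>j<n. A j \<in> carrier_mat m m" and dP: "\<forall>j<n. \<forall>y. dim_vec (Ps j y) = m"
    and dL: "L \<in> carrier_mat m m" and dW: "\<forall>i<n. \<forall>j<n. W i j \<in> carrier_mat m m"
    and adj_id: "\<forall>i<n. \<forall>j<n. adj (A i) * L + L * A j = (\<i> * (lam j - cnj (lam i))) \<cdot>\<^sub>m W i j"
    and Mf: "\<forall>y. Mf y = mat n n (\<lambda>(i,j). if i = j \<and> lam i \<in> \<real> then complex_of_real (Md i y)
        else herm (Ps i y) L (Ps j y) / (\<i> * (lam j - cnj (lam i))))"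
    and nz: "\<forall>i<n. \<forall>j<n. \<not> (i = j \<and> lam i \<in> \<real>) \<longrightarrow> lam j \<noteq> cnj (lam i)"
    and diag: "\<forall>i<n. lam i \<in> \<real> \<longrightarrow>
      ((\<lambda>y. complex_of_real (Md i y)) has_vector_derivative herm (Ps i x) (W i i) (Ps i x)) (at x)"
  shows "has_mat_derivative Mf (mat n n (\<lambda>(i,j). herm (Ps i x) (W i j) (Ps j x))) x"
  unfolding has_mat_derivative_def
proof (intro conjI allI impI)
  fix i j assume "i < dim_row (mat n n (\<lambda>(i,j). herm (Ps i x) (W i j) (Ps j x)))"
    "j < dim_col (mat n n (\<lambda>(i,j). herm (Ps i x) (W i j) (Ps j x)))"
  then have i: "i < n" and j: "j < n" by auto
  have "((\<lambda>y. Mf y $$ (i,j)) has_vector_derivative herm (Ps i x) (W i j) (Ps j x)) (at x)"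
  proof (cases "i = j \<and> lam i \<in> \<real>")
    case True
    have "(\<lambda>y. Mf y $$ (i,j)) = (\<lambda>y. complex_of_real (Md i y))" using True i j Mf by (intro ext) auto
    then show ?thesis using diag True i by auto
  next
    case False
    have "(\<lambda>y. Mf y $$ (i,j)) = (\<lambda>y. herm (Ps i y) L (Ps j y) / (\<i> * (lam j - cnj (lam i))))"
      using False i j Mf by (intro ext) auto
    moreover have "\<i> * (lam j - cnj (lam i)) \<noteq> 0" using nz False i j by auto
    ultimately show ?thesis
      using Pd dA dP dL dW adj_id i j by (auto intro!: has_vector_derivative_herm_div[where m=m])
  qed
  then show "((\<lambda>y. Mf y $$ (i,j)) has_vector_derivative
      mat n n (\<lambda>(i,j). herm (Ps i x) (W i j) (Ps j x)) $$ (i,j)) (at x)"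
    using i j by simp
qed (use Mf in auto)

lemma has_vec_derivative_pairing_vec:
  fixes Ps :: "nat \<Rightarrow> real \<Rightarrow> complex vec"
  assumes Pd: "\<forall>j<n. has_vec_derivative (Ps j) (A j *\<^sub>v Ps j x) x"
    and dA: "\<forall>j<n. A j \<in> carrier_mat m m" and dP: "\<forall>j<n. \<forall>y. dim_vec (Ps j y) = m"
    and P0d: "has_vec_derivative Pf (B *\<^sub>v Pf x) x" and dB: "B \<in> carrier_mat m m"
    and dP0: "\<forall>y. dim_vec (Pf y) = m"
    and dL: "L \<in> carrier_mat m m" and dW: "\<forall>i<n. W i \<in> carrier_mat m m"
    and adj_id: "\<forall>i<n. adj (A i) * L + L * B = (\<i> * (mu - cnj (lam i))) \<cdot>\<^sub>m W i"
    and Omf: "\<forall>y. Omf y = vec n (\<lambda>i. herm (Ps i y) L (Pf y) / (\<i> * (mu - cnj (lam i))))"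
    and nz: "\<forall>i<n. mu \<noteq> cnj (lam i)"
  shows "has_vec_derivative Omf (vec n (\<lambda>i. herm (Ps i x) (W i) (Pf x))) x"
  unfolding has_vec_derivative_def
proof (intro conjI allI impI)
  fix i assume "i < dim_vec (vec n (\<lambda>i. herm (Ps i x) (W i) (Pf x)))"
  then have i: "i < n" by simp
  have "(\<lambda>y. Omf y $ i) = (\<lambda>y. herm (Ps i y) L (Pf y) / (\<i> * (mu - cnj (lam i))))"
    using i Omf by (intro ext) simp
  moreover have "\<i> * (mu - cnj (lam i)) \<noteq> 0" using nz i by auto
  ultimately have "((\<lambda>y. Omf y $ i) has_vector_derivative herm (Ps i x) (W i) (Pf x)) (at x)"
    using Pd dA dP P0d dB dP0 dL dW adj_id i by (auto intro!: has_vector_derivative_herm_div[where m=m])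
  then show "((\<lambda>y. Omf y $ i) has_vector_derivative vec n (\<lambda>i. herm (Ps i x) (W i) (Pf x)) $ i) (at x)"
    using i by simp
qed (use Omf in auto)

lemma sigma3_eq_mat_diag: "sigma3 N = mat_diag (N+1) (\<lambda>i. if i = 0 then 1 else -1)"
  by (rule eq_matI) (auto simp: sigma3_def mat_diag_def)

lemma LambdaM_eq_mat_diag: "LambdaM N k = mat_diag (N+1) (\<lambda>i. if i = 0 then 1 else - sgnS k (i - 1))"
  by (rule eq_matI) (auto simp: LambdaM_def mat_diag_def)

lemma sigma3_dims [simp]: "dim_row (sigma3 N) = N+1" "dim_col (sigma3 N) = N+1"
  and LambdaM_dims [simp]: "dim_row (LambdaM N k) = N+1" "dim_col (LambdaM N k) = N+1"
  and Qmat_dims [simp]: "dim_row (Qmat N k q x t) = N+1" "dim_col (Qmat N k q x t) = N+1"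
  by (auto simp: sigma3_def LambdaM_def Qmat_def)

lemma Qmat_carrier [simp]: "Qmat N k q x t \<in> carrier_mat (N+1) (N+1)"
  by (simp add: carrier_matI)

lemma sigma3_squared: "sigma3 N * sigma3 N = 1\<^sub>m (N+1)"
  unfolding sigma3_eq_mat_diag mat_diag_diag by (rule eq_matI) (auto simp: mat_diag_def)

lemma sigma3_LambdaM_commute: "sigma3 N * LambdaM N k = LambdaM N k * sigma3 N"
  unfolding sigma3_eq_mat_diag LambdaM_eq_mat_diag mat_diag_diag by (simp add: mult.commute)

lemma adj_sigma3: "adj (sigma3 N) = sigma3 N"
  by (rule eq_matI) (auto simp: sigma3_def adj_def)

lemma Qmat_sigma3_anticommute: "Qmat N k q x t * sigma3 N = - (sigma3 N * Qmat N k q x t)"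
proof -
  let ?Q = "Qmat N k q x t" and ?f = "\<lambda>i. if i = 0 then 1 else - 1 :: complex"
  have "?Q * mat_diag (N+1) ?f = mat (N+1) (N+1) (\<lambda>(i,j). ?Q $$ (i,j) * ?f j)"
    by (rule mat_diag_mult_right) (rule Qmat_carrier)
  moreover have "mat_diag (N+1) ?f * ?Q = mat (N+1) (N+1) (\<lambda>(i,j). ?f i * ?Q $$ (i,j))"
    by (rule mat_diag_mult_left) (rule Qmat_carrier)
  ultimately show ?thesis
    unfolding sigma3_eq_mat_diag by (intro eq_matI) (auto simp: Qmat_def)
qed

lemma adj_Qmat_LambdaM: "adj (Qmat N k q x t) * LambdaM N k = LambdaM N k * Qmat N k q x t"
proof -
  let ?Q = "Qmat N k q x t" and ?f = "\<lambda>i. if i = 0 then 1 else - sgnS k (i - 1)"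
  have "adj ?Q * mat_diag (N+1) ?f = mat (N+1) (N+1) (\<lambda>(i,j). adj ?Q $$ (i,j) * ?f j)"
    by (rule mat_diag_mult_right) (simp add: carrier_matI)
  moreover have "mat_diag (N+1) ?f * ?Q = mat (N+1) (N+1) (\<lambda>(i,j). ?f i * ?Q $$ (i,j))"
    by (rule mat_diag_mult_left) (rule Qmat_carrier)
  ultimately show ?thesis
    unfolding LambdaM_eq_mat_diag by (intro eq_matI) (auto simp: Qmat_def sgnS_def)
qed

lemma Ux_adjoint_identity:
  "adj (Ux N a (Qmat N k q) x t) * LambdaM N k + LambdaM N k * Ux N b (Qmat N k q) x t
    = (\<i> * (b - cnj a)) \<cdot>\<^sub>m (LambdaM N k * sigma3 N)"
proof -
  let ?s = "sigma3 N" and ?L = "LambdaM N k" and ?Q = "Qmat N k q x t"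
  have s_L_mult: "?s * (?L * X) = ?L * (?s * X)" if "dim_row X = N+1" for X
    using that by (simp add: mat_dim_simps sigma3_LambdaM_commute flip: assoc_mult_mat_dims)
  have Q_L_mult: "adj ?Q * (?L * X) = ?L * (?Q * X)" if "dim_row X = N+1" for X
    using that by (simp add: mat_dim_simps adj_Qmat_LambdaM flip: assoc_mult_mat_dims)
  show ?thesis
    unfolding Ux_def
    apply (simp only: sigma3_dims LambdaM_dims Qmat_dims mat_normalize mat_dim_simps adj_dims adj_add
        adj_smult adj_mult adj_sigma3 s_L_mult Q_L_mult sigma3_LambdaM_commute adj_Qmat_LambdaM)
    apply (rule mat_eq_by_entries)
      apply (simp_all only: sigma3_dims LambdaM_dims Qmat_dims mat_dim_simps adj_dims)
    apply (simp only: sigma3_dims LambdaM_dims Qmat_dims mat_dim_simps mat_index_simps adj_dims)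
    apply (simp add: algebra_simps del: index_mult_mat)
    done
qed

lemma Vt_adjoint_identity:
  fixes N k :: nat and q q' :: "real \<Rightarrow> real \<Rightarrow> nat \<Rightarrow> complex" and x t :: real
  defines "V \<equiv> \<lambda>c. (\<i> * c^2) \<cdot>\<^sub>m sigma3 N + (\<i> * c) \<cdot>\<^sub>m Qmat N k q x t
    - (1/2) \<cdot>\<^sub>m (\<i> \<cdot>\<^sub>m (sigma3 N * (Qmat N k q x t * Qmat N k q x t)) - sigma3 N * Qmat N k q' x t)"
  shows "adj (V a) * LambdaM N k + LambdaM N k * V b
    = (\<i> * (b - cnj a)) \<cdot>\<^sub>m ((b + cnj a) \<cdot>\<^sub>m (LambdaM N k * sigma3 N) + LambdaM N k * Qmat N k q x t)"
proof -
  let ?s = "sigma3 N" and ?L = "LambdaM N k" and ?Q = "Qmat N k q x t" and ?Qx = "Qmat N k q' x t"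
  have s_L_mult: "?s * (?L * X) = ?L * (?s * X)" if "dim_row X = N+1" for X
    using that by (simp add: mat_dim_simps sigma3_LambdaM_commute flip: assoc_mult_mat_dims)
  have Q_L_mult: "adj (Qmat N k p x t) * (?L * X) = ?L * (Qmat N k p x t * X)" if "dim_row X = N+1" for X p
    using that by (simp add: mat_dim_simps adj_Qmat_LambdaM flip: assoc_mult_mat_dims)
  have Q_s_mult: "Qmat N k p x t * (?s * X) = (-1) \<cdot>\<^sub>m (?s * (Qmat N k p x t * X))" if "dim_row X = N+1" for X p
    using that by (simp add: mat_dim_simps Qmat_sigma3_anticommute mat_normalize flip: assoc_mult_mat_dims)
  have Q_s: "Qmat N k p x t * ?s = (-1) \<cdot>\<^sub>m (?s * Qmat N k p x t)" for p
    by (simp add: Qmat_sigma3_anticommute uminus_mat_eq_smult)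
  show ?thesis
    unfolding V_def
    apply (simp only: sigma3_dims LambdaM_dims Qmat_dims mat_normalize mat_dim_simps adj_dims adj_add
        adj_minus adj_smult adj_mult adj_sigma3 s_L_mult Q_L_mult sigma3_LambdaM_commute adj_Qmat_LambdaM
        Q_s_mult Q_s)
    apply (rule mat_eq_by_entries)
      apply (simp_all only: sigma3_dims LambdaM_dims Qmat_dims mat_dim_simps adj_dims)
    apply (simp only: sigma3_dims LambdaM_dims Qmat_dims mat_dim_simps mat_index_simps adj_dims)
    apply (simp add: algebra_simps power2_eq_square del: index_mult_mat)
    done
qed

lemma index_mult_mat_of_cols:
  assumes "dim_col A = m" "\<forall>j<n. dim_vec (f j) = m" "r < dim_row A" "j < n"
  shows "(A * mat_of_cols m (map f [0..<n])) $$ (r,j) = (A *\<^sub>v f j) $ r"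
proof -
  have "f j \<in> carrier_vec m" unfolding carrier_vec_def using assms by blast
  then show ?thesis using assms(3,4) by simp
qed

lemma mat_of_cols_map_affine:
  fixes A C :: "complex mat"
  assumes dA: "A \<in> carrier_mat m m" and dC: "C \<in> carrier_mat m m" and df: "\<forall>j<n. dim_vec (f j) = m"
  shows "mat_of_cols m (map (\<lambda>j. (a j \<cdot>\<^sub>m A + C) *\<^sub>v f j) [0..<n])
     = A * mat_of_cols m (map f [0..<n]) * mat_diag n a + C * mat_of_cols m (map f [0..<n])"
    (is "?l = A * ?Y * _ + C * ?Y")
proof (rule eq_matI)
  fix r j assume "r < dim_row (A * ?Y * mat_diag n a + C * ?Y)" "j < dim_col (A * ?Y * mat_diag n a + C * ?Y)"
  then have r: "r < m" and j: "j < n" using dA dC by auto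
  have "?l $$ (r,j) = a j * (A *\<^sub>v f j) $ r + (C *\<^sub>v f j) $ r"
    using r j dA dC df by (simp add: mat_of_cols_index add_mult_distrib_mat_vec_dims smult_mat_mult_vec_dims
        del: index_mult_mat_vec)
  also have "\<dots> = (A * ?Y * mat_diag n a + C * ?Y) $$ (r,j)"
  proof -
    have "(A * ?Y * mat_diag n a) $$ (r,j) = (A * ?Y) $$ (r,j) * a j"
    proof -
      have "A * ?Y \<in> carrier_mat m n" using dA by auto
      then show ?thesis using r j by (simp add: mat_diag_mult_right del: index_mult_mat)
    qed
    then show ?thesis using r j df carrier_matD[OF dA] carrier_matD[OF dC]
      by (simp del: index_mult_mat index_mult_mat_vec
          add: index_mult_mat_of_cols mat_dim_simps mult.commute)
  qed
  finally show "?l $$ (r,j) = (A * ?Y * mat_diag n a + C * ?Y) $$ (r,j)" .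
qed (use dA dC in auto)

lemma mat_of_cols_map_affine2:
  fixes A B C :: "complex mat"
  assumes dA: "A \<in> carrier_mat m m" and dB: "B \<in> carrier_mat m m" and dC: "C \<in> carrier_mat m m"
    and df: "\<forall>j<n. dim_vec (f j) = m"
  shows "mat_of_cols m (map (\<lambda>j. (a j \<cdot>\<^sub>m A + b j \<cdot>\<^sub>m B - C) *\<^sub>v f j) [0..<n])
     = A * mat_of_cols m (map f [0..<n]) * mat_diag n a + B * mat_of_cols m (map f [0..<n]) * mat_diag n b
       - C * mat_of_cols m (map f [0..<n])"
    (is "?l = A * ?Y * _ + B * ?Y * _ - C * ?Y")
proof (rule eq_matI)
  fix r j assume "r < dim_row (A * ?Y * mat_diag n a + B * ?Y * mat_diag n b - C * ?Y)"
    "j < dim_col (A * ?Y * mat_diag n a + B * ?Y * mat_diag n b - C * ?Y)"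
  then have r: "r < m" and j: "j < n" using dA dC by auto
  have "?l $$ (r,j) = a j * (A *\<^sub>v f j) $ r + b j * (B *\<^sub>v f j) $ r - (C *\<^sub>v f j) $ r"
    using r j dA dB dC df by (simp add: mat_of_cols_index add_mult_distrib_mat_vec_dims smult_mat_mult_vec_dims
        minus_mat_eq_add_smult del: index_mult_mat_vec)
  also have "\<dots> = (A * ?Y * mat_diag n a + B * ?Y * mat_diag n b - C * ?Y) $$ (r,j)"
  proof -
    have "(A * ?Y * mat_diag n a) $$ (r,j) = (A * ?Y) $$ (r,j) * a j"
    proof -
      have "A * ?Y \<in> carrier_mat m n" using dA by auto
      then show ?thesis using r j by (simp add: mat_diag_mult_right del: index_mult_mat)
    qed
    moreover have "(B * ?Y * mat_diag n b) $$ (r,j) = (B * ?Y) $$ (r,j) * b j"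
    proof -
      have "B * ?Y \<in> carrier_mat m n" using dB by auto
      then show ?thesis using r j by (simp add: mat_diag_mult_right del: index_mult_mat)
    qed
    ultimately show ?thesis using r j df carrier_matD[OF dA] carrier_matD[OF dB] carrier_matD[OF dC]
      by (simp del: index_mult_mat index_mult_mat_vec
          add: index_mult_mat_of_cols mat_dim_simps mult.commute)
  qed
  finally show "?l $$ (r,j) = (A * ?Y * mat_diag n a + B * ?Y * mat_diag n b - C * ?Y) $$ (r,j)" .
qed (use dA dC in auto)

lemma pairing_mat_sylvester:
  assumes dP: "\<forall>j<n. dim_vec (Ph j) = m" and dL: "L \<in> carrier_mat m m"
    and M0: "M0 = mat n n (\<lambda>(i, j). if i = j \<and> lam i \<in> \<real> then c i
        else herm (Ph i) L (Ph j) / (\<i> * (lam j - cnj (lam i))))"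
    and nz: "\<forall>i<n. \<forall>j<n. \<not> (i = j \<and> lam i \<in> \<real>) \<longrightarrow> lam j \<noteq> cnj (lam i)"
    and null: "\<forall>i<n. lam i \<in> \<real> \<longrightarrow> herm (Ph i) L (Ph i) = 0"
  shows "adj (mat_of_cols m (map Ph [0..<n])) * L * mat_of_cols m (map Ph [0..<n])
     = \<i> \<cdot>\<^sub>m (M0 * mat_diag n lam - mat_diag n (\<lambda>i. cnj (lam i)) * M0)"
  unfolding adj_mat_of_cols_mult_mat[OF dP dL]
proof (rule eq_matI)
  fix i j assume "i < dim_row (\<i> \<cdot>\<^sub>m (M0 * mat_diag n lam - mat_diag n (\<lambda>i. cnj (lam i)) * M0))"
    "j < dim_col (\<i> \<cdot>\<^sub>m (M0 * mat_diag n lam - mat_diag n (\<lambda>i. cnj (lam i)) * M0))"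
  then have i: "i < n" and j: "j < n" using M0 by auto
  have dM: "M0 \<in> carrier_mat n n" using M0 by simp
  have "(\<i> \<cdot>\<^sub>m (M0 * mat_diag n lam - mat_diag n (\<lambda>i. cnj (lam i)) * M0)) $$ (i,j)
      = \<i> * (lam j - cnj (lam i)) * M0 $$ (i,j)"
    using i j dM by (simp del: index_mult_mat add: mat_diag_mult_left mat_diag_mult_right algebra_simps)
  also have "\<dots> = mat n n (\<lambda>(i,j). herm (Ph i) L (Ph j)) $$ (i,j)"
  proof (cases "i = j \<and> lam i \<in> \<real>")
    case True
    then show ?thesis using null i by (auto simp: Reals_cnj_iff)
  next
    case False
    then have "\<i> * (lam j - cnj (lam i)) \<noteq> 0" using nz i j by auto
    then show ?thesis using False i j M0 by auto
  qed
  finally show "mat n n (\<lambda>(i,j). herm (Ph i) L (Ph j)) $$ (i,j)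
      = (\<i> \<cdot>\<^sub>m (M0 * mat_diag n lam - mat_diag n (\<lambda>i. cnj (lam i)) * M0)) $$ (i,j)" ..
qed (use M0 in auto)

lemma pairing_vec_eq:
  assumes dP: "\<forall>j<n. dim_vec (Ph j) = m" and dL: "L \<in> carrier_mat m m" and dv: "dim_vec v = m"
    and Om0: "Om0 = vec n (\<lambda>i. herm (Ph i) L v / (\<i> * (mu - cnj (lam i))))"
    and nz: "\<forall>i<n. mu \<noteq> cnj (lam i)"
  shows "adj (mat_of_cols m (map Ph [0..<n])) *\<^sub>v (L *\<^sub>v v)
    = \<i> \<cdot>\<^sub>v (mu \<cdot>\<^sub>v Om0 - mat_diag n (\<lambda>i. cnj (lam i)) *\<^sub>v Om0)"
  unfolding adj_mat_of_cols_mult_vec[OF dP dL dv]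
proof (rule eq_vecI)
  fix i assume "i < dim_vec (\<i> \<cdot>\<^sub>v (mu \<cdot>\<^sub>v Om0 - mat_diag n (\<lambda>i. cnj (lam i)) *\<^sub>v Om0))"
  then have i: "i < n" using Om0 by simp
  have dOm: "dim_vec Om0 = n" using Om0 by simp
  have "(\<i> \<cdot>\<^sub>v (mu \<cdot>\<^sub>v Om0 - mat_diag n (\<lambda>i. cnj (lam i)) *\<^sub>v Om0)) $ i
      = (\<i> * (mu - cnj (lam i))) * Om0 $ i"
    using i dOm by (simp add: mat_diag_mult_vec ring_distribs)
  also have "\<dots> = vec n (\<lambda>i. herm (Ph i) L v) $ i" using nz i Om0 by simp
  finally show "vec n (\<lambda>i. herm (Ph i) L v) $ i
      = (\<i> \<cdot>\<^sub>v (mu \<cdot>\<^sub>v Om0 - mat_diag n (\<lambda>i. cnj (lam i)) *\<^sub>v Om0)) $ i" ..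
qed (use Om0 in auto)

lemma pairing_mat_split:
  assumes dP: "\<forall>j<n. dim_vec (Ph j) = m" and dB1: "B1 \<in> carrier_mat m m" and dB2: "B2 \<in> carrier_mat m m"
  defines "Y \<equiv> mat_of_cols m (map Ph [0..<n])"
  shows "mat n n (\<lambda>(i,j). herm (Ph i) ((lam j + cnj (lam i)) \<cdot>\<^sub>m B1 + B2) (Ph j))
    = adj Y * B1 * Y * mat_diag n lam + mat_diag n (\<lambda>i. cnj (lam i)) * (adj Y * B1 * Y) + adj Y * B2 * Y"
  unfolding Y_def adj_mat_of_cols_mult_mat[OF dP dB1] adj_mat_of_cols_mult_mat[OF dP dB2]
  using dP dB1 dB2
  by (intro eq_matI) (auto simp: mat_diag_mult_left[of _ n n] mat_diag_mult_right[of _ n n]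
      herm_add_mat herm_smult_mat algebra_simps)

lemma pairing_vec_split:
  assumes dP: "\<forall>j<n. dim_vec (Ph j) = m" and dB1: "B1 \<in> carrier_mat m m" and dB2: "B2 \<in> carrier_mat m m"
    and dv: "dim_vec v = m"
  defines "Y \<equiv> mat_of_cols m (map Ph [0..<n])"
  shows "vec n (\<lambda>i. herm (Ph i) ((mu + cnj (lam i)) \<cdot>\<^sub>m B1 + B2) v)
    = mu \<cdot>\<^sub>v (adj Y *\<^sub>v (B1 *\<^sub>v v)) + mat_diag n (\<lambda>i. cnj (lam i)) *\<^sub>v (adj Y *\<^sub>v (B1 *\<^sub>v v))
      + adj Y *\<^sub>v (B2 *\<^sub>v v)"
  unfolding Y_def adj_mat_of_cols_mult_vec[OF dP dB1 dv] adj_mat_of_cols_mult_vec[OF dP dB2 dv]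
  using dP dB1 dB2 dv
  by (intro eq_vecI) (auto simp: mat_diag_mult_vec herm_add_mat herm_smult_mat algebra_simps)

lemma vhas_dx_iff: "vhas_dx F G x t \<longleftrightarrow> has_vec_derivative (\<lambda>y. F y t) G x"
  unfolding has_vec_derivative_def vhas_dx_def by auto

lemma vhas_dt_iff: "vhas_dt F G x t \<longleftrightarrow> has_vec_derivative (\<lambda>s. F x s) G t"
  unfolding has_vec_derivative_def vhas_dt_def by auto

lemma has_mat_derivative_imp_mdx:
  assumes "has_mat_derivative (\<lambda>y. F y t) G x"
  shows "mdx F x t = G" and "mdiff_x F x t"
  using assms unfolding has_mat_derivative_def mdx_def mdiff_x_def
  by (auto intro!: eq_matI simp: vector_derivative_at intro: differentiableI_vector)

definition dx_q :: "(real \<Rightarrow> real \<Rightarrow> nat \<Rightarrow> complex) \<Rightarrow> real \<Rightarrow> real \<Rightarrow> nat \<Rightarrow> complex" where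
  "dx_q q x t l = vector_derivative (\<lambda>y. q y t l) (at x)"

lemma has_mat_derivative_Qmat:
  assumes q: "\<forall>l<N. (\<lambda>y. q y t l) differentiable (at x)"
  shows "has_mat_derivative (\<lambda>y. Qmat N k q y t) (Qmat N k (dx_q q) x t) x"
  unfolding has_mat_derivative_def
proof (intro conjI allI impI)
  fix i j assume "i < dim_row (Qmat N k (dx_q q) x t)" "j < dim_col (Qmat N k (dx_q q) x t)"
  then have i: "i < N+1" and j: "j < N+1" by auto
  have dq: "((\<lambda>y. q y t l) has_vector_derivative dx_q q x t l) (at x)" if "l < N" for l
    using q that unfolding dx_q_def by (simp add: vector_derivative_works[symmetric])
  consider "i = 0 \<and> 1 \<le> j" | "1 \<le> i \<and> j = 0" | "\<not> (i = 0 \<and> 1 \<le> j)" "\<not> (1 \<le> i \<and> j = 0)" by blast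
  then show "((\<lambda>y. Qmat N k q y t $$ (i, j)) has_vector_derivative Qmat N k (dx_q q) x t $$ (i, j)) (at x)"
    by cases (use i j dq[of "j - 1"] dq[of "i - 1"] in
        \<open>auto simp: Qmat_def intro!: has_vector_derivative_minus has_vector_derivative_mult_left has_vector_derivative_cnj\<close>)
qed auto

lemma lax_solution_derivatives:
  assumes "lax_solution N k q c P"
  shows "has_vec_derivative (\<lambda>y. P y t) (Ux N c (Qmat N k q) x t *\<^sub>v P x t) x"
    and "has_vec_derivative (\<lambda>s. P x s) (Vt N c (Qmat N k q) x t *\<^sub>v P x t) t"
  using assms by (auto simp: lax_solution_def simp flip: vhas_dx_iff vhas_dt_iff)

section \<open>The Darboux transformation\<close>

locale darboux_transformation =
  fixes N k n :: nat
    and q :: "real \<Rightarrow> real \<Rightarrow> nat \<Rightarrow> complex"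
    and lam :: "nat \<Rightarrow> complex"
    and Phis :: "nat \<Rightarrow> real \<Rightarrow> real \<Rightarrow> complex vec"
    and lambda :: complex
    and Phi :: "real \<Rightarrow> real \<Rightarrow> complex vec"
    and Md :: "nat \<Rightarrow> real \<Rightarrow> real \<Rightarrow> real"
    and M Y :: "real \<Rightarrow> real \<Rightarrow> complex mat"
    and Om Phin :: "real \<Rightarrow> real \<Rightarrow> complex vec"
    and Qn :: "real \<Rightarrow> real \<Rightarrow> complex mat"
  assumes q_smooth: "\<forall>l < N. smooth2 (\<lambda>x t. q x t l)"
    and sols: "\<forall>j < n. lax_solution N k q (lam j) (Phis j)"
    and distinct: "\<forall>i < n. \<forall>j < n. i \<noteq> j \<longrightarrow> lam j \<noteq> cnj (lam i)"
    and sol: "lax_solution N k q lambda Phi"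
    and lambda_ne: "\<forall>i < n. lambda \<noteq> cnj (lam i)"
    and real_null: "\<forall>i < n. lam i \<in> \<real> \<longrightarrow> (\<forall>x t. herm (Phis i x t) (LambdaM N k) (Phis i x t) = 0)"
    and real_dM: "\<forall>i < n. lam i \<in> \<real> \<longrightarrow> (\<forall>x t.
        ((\<lambda>y. complex_of_real (Md i y t)) has_vector_derivative
            omega_x N k (Phis i x t) (Phis i x t)) (at x) \<and>
        ((\<lambda>s. complex_of_real (Md i x s)) has_vector_derivative
            omega_t N k (Qmat N k q x t) (lam i) (lam i) (Phis i x t) (Phis i x t)) (at t))"
    and M_def: "\<forall>x t. M x t = mat n n (\<lambda>(i, j).
        if i = j \<and> lam i \<in> \<real> then complex_of_real (Md i x t)
        else herm (Phis i x t) (LambdaM N k) (Phis j x t) / (\<i> * (lam j - cnj (lam i))))"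
    and M_inv: "\<forall>x t. invertible_mat (M x t)"
    and Y_def: "\<forall>x t. Y x t = mat_of_cols (N+1) (map (\<lambda>j. Phis j x t) [0..<n])"
    and Om_def: "\<forall>x t. Om x t = vec n (\<lambda>i.
        herm (Phis i x t) (LambdaM N k) (Phi x t) / (\<i> * (lambda - cnj (lam i))))"
    and Phin_def: "\<forall>x t. Phin x t = Phi x t - Y x t *\<^sub>v (minv (M x t) *\<^sub>v Om x t)"
    and Qn_def: "\<forall>x t. Qn x t = Qmat N k q x t - \<i> \<cdot>\<^sub>m
        (sigma3 N * (Y x t * minv (M x t) * adj (Y x t) * LambdaM N k)
         - (Y x t * minv (M x t) * adj (Y x t) * LambdaM N k) * sigma3 N)"
begin

abbreviation D :: "complex mat" where "D \<equiv> mat_diag n lam"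
abbreviation Dc :: "complex mat" where "Dc \<equiv> mat_diag n (\<lambda>i. cnj (lam i))"

lemma Phis_dim: "\<forall>j<n. dim_vec (Phis j x t) = N+1"
  using sols by (auto simp: lax_solution_def)

lemma Phi_dim [simp]: "dim_vec (Phi x t) = N+1"
  using sol by (auto simp: lax_solution_def)

lemma Y_eq: "Y x t = mat_of_cols (N+1) (map (\<lambda>j. Phis j x t) [0..<n])"
  using Y_def by simp

lemma Y_dims [simp]: "dim_row (Y x t) = N+1" "dim_col (Y x t) = n"
  by (simp_all add: Y_eq)

lemma M_carrier: "M x t \<in> carrier_mat n n"
  using M_def by simp

lemma M_dims [simp]: "dim_row (M x t) = n" "dim_col (M x t) = n"
  using M_carrier by auto

lemma Om_dim [simp]: "dim_vec (Om x t) = n"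
  using Om_def by simp

lemma minv_M: "minv (M x t) * M x t = 1\<^sub>m n" "M x t * minv (M x t) = 1\<^sub>m n"
  "minv (M x t) \<in> carrier_mat n n"
  using invertible_minv[OF M_carrier] M_inv by auto

lemma minv_M_dims [simp]: "dim_row (minv (M x t)) = n" "dim_col (minv (M x t)) = n"
  using minv_M(3) by auto

lemma pairing_denominators_nonzero:
  "\<forall>i<n. \<forall>j<n. \<not> (i = j \<and> lam i \<in> \<real>) \<longrightarrow> lam j \<noteq> cnj (lam i)"
  using distinct by (metis Reals_cnj_iff)

lemma dressing_at:
  "dressing_algebra (N+1) n (sigma3 N) (LambdaM N k) (Qmat N k q x t) (Y x t) (M x t) (minv (M x t))
     D Dc lambda (Phi x t) (Om x t)"
proof unfold_locales
  show "adj (Y x t) * LambdaM N k * Y x t = \<i> \<cdot>\<^sub>m (M x t * D - Dc * M x t)"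
    unfolding Y_eq using Phis_dim M_def pairing_denominators_nonzero real_null
    by (intro pairing_mat_sylvester[where c="\<lambda>i. complex_of_real (Md i x t)"]) auto
  show "adj (Y x t) *\<^sub>v (LambdaM N k *\<^sub>v Phi x t) = \<i> \<cdot>\<^sub>v (lambda \<cdot>\<^sub>v Om x t - Dc *\<^sub>v Om x t)"
    unfolding Y_eq using Phis_dim Om_def lambda_ne by (intro pairing_vec_eq) auto
qed (use M_carrier minv_M in \<open>auto simp: sigma3_squared sigma3_LambdaM_commute Qmat_sigma3_anticommute
      adj_sigma3 adj_mat_diag adj_Qmat_LambdaM\<close>)

lemma q_differentiable: "l < N \<Longrightarrow> (\<lambda>y. q y t l) differentiable (at x)"
proof -
  assume "l < N"
  then have "(\<lambda>y. pd [] (\<lambda>x t. q x t l) y t) differentiable (at x)"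
    using q_smooth unfolding smooth2_def by blast
  then show ?thesis by simp
qed

lemma Q_x_derivative: "has_mat_derivative (\<lambda>y. Qmat N k q y t) (Qmat N k (dx_q q) x t) x"
  using q_differentiable by (intro has_mat_derivative_Qmat) auto

lemma Ux_carrier: "Ux N c (Qmat N k q) x t \<in> carrier_mat (N+1) (N+1)"
  by (simp add: Ux_def carrier_matI)

lemma Phis_x_derivative:
  "\<forall>j<n. has_vec_derivative (\<lambda>y. Phis j y t) (Ux N (lam j) (Qmat N k q) x t *\<^sub>v Phis j x t) x"
  using sols lax_solution_derivatives(1) by blast

definition Y_x :: "real \<Rightarrow> real \<Rightarrow> complex mat" where
  "Y_x x t = sigma3 N * Y x t * (\<i> \<cdot>\<^sub>m D) + (\<i> \<cdot>\<^sub>m Qmat N k q x t) * Y x t"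

definition M_x :: "real \<Rightarrow> real \<Rightarrow> complex mat" where
  "M_x x t = adj (Y x t) * (LambdaM N k * sigma3 N) * Y x t"

definition P_x :: "real \<Rightarrow> real \<Rightarrow> complex mat" where
  "P_x x t = ((Y_x x t * minv (M x t) + Y x t * (- (minv (M x t) * M_x x t * minv (M x t)))) * adj (Y x t)
     + Y x t * minv (M x t) * adj (Y_x x t)) * LambdaM N k"

lemma Y_x_dims [simp]: "dim_row (Y_x x t) = N+1" "dim_col (Y_x x t) = n"
  and M_x_dims [simp]: "dim_row (M_x x t) = n" "dim_col (M_x x t) = n"
  and P_x_dims [simp]: "dim_row (P_x x t) = N+1" "dim_col (P_x x t) = N+1"
  by (simp_all add: Y_x_def M_x_def P_x_def)

lemma Y_x_derivative: "has_mat_derivative (\<lambda>y. Y y t) (Y_x x t) x"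
proof -
  have "has_mat_derivative (\<lambda>y. Y y t)
      (mat_of_cols (N+1) (map (\<lambda>j. Ux N (lam j) (Qmat N k q) x t *\<^sub>v Phis j x t) [0..<n])) x"
    unfolding Y_eq using sols lax_solution_derivatives(1)
    by (intro has_mat_derivative_mat_of_cols) (auto simp: Ux_def)
  moreover have "mat_of_cols (N+1) (map (\<lambda>j. Ux N (lam j) (Qmat N k q) x t *\<^sub>v Phis j x t) [0..<n]) = Y_x x t"
    unfolding Ux_def Y_x_def Y_eq using Phis_dim
    by (subst mat_of_cols_map_affine) (auto simp: smult_mat_diag carrier_matI)
  ultimately show ?thesis by simp
qed

lemma M_x_derivative: "has_mat_derivative (\<lambda>y. M y t) (M_x x t) x"
proof -
  have "has_mat_derivative (\<lambda>y. M y t) (mat n n (\<lambda>(i,j). herm (Phis i x t) (LambdaM N k * sigma3 N) (Phis j x t))) x"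
  proof (rule has_mat_derivative_pairing_mat[where A="\<lambda>j. Ux N (lam j) (Qmat N k q) x t" and m="N+1"
        and L="LambdaM N k" and W="\<lambda>i j. LambdaM N k * sigma3 N" and Md="\<lambda>i y. Md i y t" and lam=lam])
    show "\<forall>i<n. lam i \<in> \<real> \<longrightarrow> ((\<lambda>y. complex_of_real (Md i y t)) has_vector_derivative
        herm (Phis i x t) (LambdaM N k * sigma3 N) (Phis i x t)) (at x)"
      using real_dM by (simp add: omega_x_def)
  qed (use Phis_x_derivative Phis_dim M_def pairing_denominators_nonzero Ux_adjoint_identity Ux_carrier
      in auto)
  then show ?thesis
    unfolding M_x_def Y_eq using Phis_dim by (simp add: adj_mat_of_cols_mult_mat carrier_matI)
qed

lemma Om_x_derivative:
  "has_vec_derivative (\<lambda>y. Om y t) (adj (Y x t) *\<^sub>v ((LambdaM N k * sigma3 N) *\<^sub>v Phi x t)) x"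
proof -
  have "has_vec_derivative (\<lambda>y. Om y t) (vec n (\<lambda>i. herm (Phis i x t) (LambdaM N k * sigma3 N) (Phi x t))) x"
    by (rule has_vec_derivative_pairing_vec[where A="\<lambda>j. Ux N (lam j) (Qmat N k q) x t" and m="N+1"
        and B="Ux N lambda (Qmat N k q) x t" and L="LambdaM N k" and W="\<lambda>i. LambdaM N k * sigma3 N"
        and lam=lam and mu=lambda])
      (use Phis_x_derivative lax_solution_derivatives(1)[OF sol] Phis_dim Om_def lambda_ne
        Ux_adjoint_identity Ux_carrier in auto)
  then show ?thesis
    unfolding Y_eq using Phis_dim by (simp add: adj_mat_of_cols_mult_vec carrier_matI)
qed

lemma minv_M_x_derivative:
  "has_mat_derivative (\<lambda>y. minv (M y t)) (- (minv (M x t) * M_x x t * minv (M x t))) x"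
  using M_carrier M_inv by (intro has_mat_derivative_minv[OF M_x_derivative]) auto

lemma Qn_x_derivative:
  "has_mat_derivative (\<lambda>y. Qn y t) (Qmat N k (dx_q q) x t - \<i> \<cdot>\<^sub>m (sigma3 N * P_x x t - P_x x t * sigma3 N)) x"
proof -
  have "has_mat_derivative (\<lambda>y. Y y t * minv (M y t))
      (Y_x x t * minv (M x t) + Y x t * - (minv (M x t) * M_x x t * minv (M x t))) x"
    by (rule has_mat_derivative_mult[OF Y_x_derivative minv_M_x_derivative]) simp
  from has_mat_derivative_mult[OF this has_mat_derivative_adj[OF Y_x_derivative]]
  have "has_mat_derivative (\<lambda>y. Y y t * minv (M y t) * adj (Y y t) * LambdaM N k) (P_x x t) x"
    unfolding P_x_def by (intro has_mat_derivative_mult_const) simp_all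
  then have "has_mat_derivative (\<lambda>y. sigma3 N * (Y y t * minv (M y t) * adj (Y y t) * LambdaM N k)
      - (Y y t * minv (M y t) * adj (Y y t) * LambdaM N k) * sigma3 N) (sigma3 N * P_x x t - P_x x t * sigma3 N) x"
    by (intro has_mat_derivative_diff has_mat_derivative_const_mult has_mat_derivative_mult_const) simp_all
  then show ?thesis
    unfolding Qn_def[rule_format]
    by (intro has_mat_derivative_diff[OF Q_x_derivative] has_mat_derivative_smult) simp_all
qed

lemma Qn_mdiff_x: "mdiff_x Qn x t"
  and mdx_Qn: "mdx Qn x t = Qmat N k (dx_q q) x t - \<i> \<cdot>\<^sub>m (sigma3 N * P_x x t - P_x x t * sigma3 N)"
  using has_mat_derivative_imp_mdx[where F=Qn, OF Qn_x_derivative] by blast+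

lemma Phin_x_derivative: "vhas_dx Phin (Ux N lambda Qn x t *\<^sub>v Phin x t) x t"
proof -
  interpret A: dressing_algebra "N+1" n "sigma3 N" "LambdaM N k" "Qmat N k q x t" "Y x t" "M x t"
      "minv (M x t)" D Dc lambda "Phi x t" "Om x t"
    by (rule dressing_at)
  let ?Mi' = "- (minv (M x t) * M_x x t * minv (M x t))"
    and ?Om' = "adj (Y x t) *\<^sub>v ((LambdaM N k * sigma3 N) *\<^sub>v Phi x t)"
  have "has_vec_derivative (\<lambda>y. minv (M y t) *\<^sub>v Om y t) (?Mi' *\<^sub>v Om x t + minv (M x t) *\<^sub>v ?Om') x"
    by (rule has_mat_derivative_mult_vec[OF minv_M_x_derivative Om_x_derivative]) simp
  from has_mat_derivative_mult_vec[OF Y_x_derivative this]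
  have "has_vec_derivative (\<lambda>y. Phin y t) (Ux N lambda (Qmat N k q) x t *\<^sub>v Phi x t
      - (Y_x x t *\<^sub>v (minv (M x t) *\<^sub>v Om x t) + Y x t *\<^sub>v (?Mi' *\<^sub>v Om x t + minv (M x t) *\<^sub>v ?Om'))) x"
    unfolding Phin_def[rule_format]
    by (intro has_vec_derivative_diff[OF lax_solution_derivatives(1)[OF sol]]) (simp_all add: Ux_def)
  also have "Ux N lambda (Qmat N k q) x t *\<^sub>v Phi x t
      - (Y_x x t *\<^sub>v (minv (M x t) *\<^sub>v Om x t) + Y x t *\<^sub>v (?Mi' *\<^sub>v Om x t + minv (M x t) *\<^sub>v ?Om'))
    = Ux N lambda Qn x t *\<^sub>v Phin x t"
  proof -
    have "Y_x x t = A.Yx" "M_x x t = A.Mx" "?Om' = A.Omx" "Qn x t = A.Qn"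
      by (simp_all only: Y_x_def A.Yx_def M_x_def A.Mx_def A.Omx_def A.Qn_def A.P_def Qn_def)
    then show ?thesis
      unfolding Ux_def Phin_def[rule_format] by (simp only: A.dressed_x_equation)
  qed
  finally show ?thesis unfolding vhas_dx_iff .
qed

definition C :: "real \<Rightarrow> real \<Rightarrow> complex mat" where
  "C x t = (1/2) \<cdot>\<^sub>m (\<i> \<cdot>\<^sub>m (sigma3 N * (Qmat N k q x t * Qmat N k q x t)) - sigma3 N * Qmat N k (dx_q q) x t)"

lemma C_carrier: "C x t \<in> carrier_mat (N+1) (N+1)"
  by (simp add: C_def carrier_matI)

lemma Vt_Qmat: "Vt N c (Qmat N k q) x t = (\<i> * c^2) \<cdot>\<^sub>m sigma3 N + (\<i> * c) \<cdot>\<^sub>m Qmat N k q x t - C x t"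
  by (simp add: Vt_def C_def has_mat_derivative_imp_mdx(1)[OF Q_x_derivative])

lemma Vt_dims [simp]: "dim_row (Vt N c (Qmat N k q) x t) = N+1" "dim_col (Vt N c (Qmat N k q) x t) = N+1"
  by (simp_all add: Vt_Qmat C_def)

lemma Vt_carrier: "Vt N c (Qmat N k q) x t \<in> carrier_mat (N+1) (N+1)"
  by (simp add: carrier_matI)

lemma Vt_Qmat_adjoint_identity:
  "adj (Vt N a (Qmat N k q) x t) * LambdaM N k + LambdaM N k * Vt N b (Qmat N k q) x t
    = (\<i> * (b - cnj a)) \<cdot>\<^sub>m ((b + cnj a) \<cdot>\<^sub>m (LambdaM N k * sigma3 N) + LambdaM N k * Qmat N k q x t)"
  unfolding Vt_Qmat C_def by (rule Vt_adjoint_identity)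

lemma Phis_t_derivative:
  "\<forall>j<n. has_vec_derivative (\<lambda>s. Phis j x s) (Vt N (lam j) (Qmat N k q) x t *\<^sub>v Phis j x t) t"
  using sols lax_solution_derivatives(2) by blast

abbreviation W_t :: "real \<Rightarrow> real \<Rightarrow> complex \<Rightarrow> complex mat" where
  "W_t x t c \<equiv> c \<cdot>\<^sub>m (LambdaM N k * sigma3 N) + LambdaM N k * Qmat N k q x t"

lemma Y_t_derivative: "has_mat_derivative (\<lambda>s. Y x s)
    (sigma3 N * Y x t * (\<i> \<cdot>\<^sub>m (D * D)) + Qmat N k q x t * Y x t * (\<i> \<cdot>\<^sub>m D) - C x t * Y x t) t"
proof -
  have "has_mat_derivative (\<lambda>s. Y x s)
      (mat_of_cols (N+1) (map (\<lambda>j. Vt N (lam j) (Qmat N k q) x t *\<^sub>v Phis j x t) [0..<n])) t"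
    unfolding Y_eq using Phis_t_derivative Vt_carrier
    by (intro has_mat_derivative_mat_of_cols) auto
  moreover have "mat_of_cols (N+1) (map (\<lambda>j. Vt N (lam j) (Qmat N k q) x t *\<^sub>v Phis j x t) [0..<n])
      = sigma3 N * Y x t * (\<i> \<cdot>\<^sub>m (D * D)) + Qmat N k q x t * Y x t * (\<i> \<cdot>\<^sub>m D) - C x t * Y x t"
  proof -
    have diag: "\<i> \<cdot>\<^sub>m (D * D) = mat_diag n (\<lambda>j. \<i> * lam j ^ 2)" "\<i> \<cdot>\<^sub>m D = mat_diag n (\<lambda>j. \<i> * lam j)"
      by (simp_all add: smult_mat_diag power2_eq_square)
    show ?thesis
      unfolding Vt_Qmat Y_eq diag by (intro mat_of_cols_map_affine2) (use Phis_dim C_carrier in auto)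
  qed
  ultimately show ?thesis by simp
qed

lemma M_t_derivative: "has_mat_derivative (\<lambda>s. M x s)
    (adj (Y x t) * (LambdaM N k * sigma3 N) * Y x t * D + Dc * (adj (Y x t) * (LambdaM N k * sigma3 N) * Y x t)
      + adj (Y x t) * (LambdaM N k * Qmat N k q x t) * Y x t) t"
proof -
  have "has_mat_derivative (\<lambda>s. M x s)
      (mat n n (\<lambda>(i,j). herm (Phis i x t) (W_t x t (lam j + cnj (lam i))) (Phis j x t))) t"
  proof (rule has_mat_derivative_pairing_mat[where A="\<lambda>j. Vt N (lam j) (Qmat N k q) x t" and m="N+1"
        and L="LambdaM N k" and W="\<lambda>i j. W_t x t (lam j + cnj (lam i))" and Md="\<lambda>i s. Md i x s" and lam=lam])
    show "\<forall>i<n. lam i \<in> \<real> \<longrightarrow> ((\<lambda>s. complex_of_real (Md i x s)) has_vector_derivative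
        herm (Phis i x t) (W_t x t (lam i + cnj (lam i))) (Phis i x t)) (at t)"
      using real_dM Phis_dim by (simp add: omega_t_def herm_add_mat herm_smult_mat)
  qed (use Phis_t_derivative Phis_dim M_def pairing_denominators_nonzero Vt_Qmat_adjoint_identity Vt_carrier
      in \<open>auto simp: carrier_matI\<close>)
  moreover have "LambdaM N k * sigma3 N \<in> carrier_mat (N+1) (N+1)"
    and "LambdaM N k * Qmat N k q x t \<in> carrier_mat (N+1) (N+1)" by (simp_all add: carrier_matI)
  ultimately show ?thesis
    unfolding Y_eq by (simp only: pairing_mat_split[OF Phis_dim])
qed

lemma Om_t_derivative: "has_vec_derivative (\<lambda>s. Om x s)
    (lambda \<cdot>\<^sub>v (adj (Y x t) *\<^sub>v ((LambdaM N k * sigma3 N) *\<^sub>v Phi x t))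
      + Dc *\<^sub>v (adj (Y x t) *\<^sub>v ((LambdaM N k * sigma3 N) *\<^sub>v Phi x t))
      + adj (Y x t) *\<^sub>v ((LambdaM N k * Qmat N k q x t) *\<^sub>v Phi x t)) t"
proof -
  have "has_vec_derivative (\<lambda>s. Om x s) (vec n (\<lambda>i. herm (Phis i x t) (W_t x t (lambda + cnj (lam i))) (Phi x t))) t"
    by (rule has_vec_derivative_pairing_vec[where A="\<lambda>j. Vt N (lam j) (Qmat N k q) x t" and m="N+1"
        and B="Vt N lambda (Qmat N k q) x t" and L="LambdaM N k" and W="\<lambda>i. W_t x t (lambda + cnj (lam i))"
        and lam=lam and mu=lambda])
      (use Phis_t_derivative lax_solution_derivatives(2)[OF sol] Phis_dim Om_def lambda_ne
        Vt_Qmat_adjoint_identity Vt_carrier in \<open>auto simp: carrier_matI\<close>)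
  moreover have "LambdaM N k * sigma3 N \<in> carrier_mat (N+1) (N+1)"
    and "LambdaM N k * Qmat N k q x t \<in> carrier_mat (N+1) (N+1)" by (simp_all add: carrier_matI)
  ultimately show ?thesis
    unfolding Y_eq by (simp only: pairing_vec_split[OF Phis_dim _ _ Phi_dim])
qed

lemma Phin_t_derivative: "vhas_dt Phin (Vt N lambda Qn x t *\<^sub>v Phin x t) x t"
proof -
  interpret A: dressing_algebra "N+1" n "sigma3 N" "LambdaM N k" "Qmat N k q x t" "Y x t" "M x t"
      "minv (M x t)" D Dc lambda "Phi x t" "Om x t"
    by (rule dressing_at)
  let ?Qx = "Qmat N k (dx_q q) x t"
  have C: "C x t = A.C ?Qx" by (simp only: C_def A.C_def)
  have Y': "has_mat_derivative (\<lambda>s. Y x s) (A.Yt ?Qx) t"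
    using Y_t_derivative[of x t] unfolding A.Yt_def C .
  have M': "has_mat_derivative (\<lambda>s. M x s) A.Mt t"
    using M_t_derivative[of x t] unfolding A.Mt_def .
  have Om': "has_vec_derivative (\<lambda>s. Om x s) A.Omt t"
    using Om_t_derivative[of x t] unfolding A.Omt_def .
  have Mi': "has_mat_derivative (\<lambda>s. minv (M x s)) (- (minv (M x t) * A.Mt * minv (M x t))) t"
    using M_carrier M_inv by (intro has_mat_derivative_minv[OF M']) auto
  have "has_vec_derivative (\<lambda>s. minv (M x s) *\<^sub>v Om x s)
      (- (minv (M x t) * A.Mt * minv (M x t)) *\<^sub>v Om x t + minv (M x t) *\<^sub>v A.Omt) t"
    by (rule has_mat_derivative_mult_vec[OF Mi' Om']) (simp add: A.Omt_def)
  from has_mat_derivative_mult_vec[OF Y' this]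
  have "has_vec_derivative (\<lambda>s. Phin x s) (Vt N lambda (Qmat N k q) x t *\<^sub>v Phi x t
      - (A.Yt ?Qx *\<^sub>v (minv (M x t) *\<^sub>v Om x t)
         + Y x t *\<^sub>v (- (minv (M x t) * A.Mt * minv (M x t)) *\<^sub>v Om x t + minv (M x t) *\<^sub>v A.Omt))) t"
    unfolding Phin_def[rule_format]
    by (intro has_vec_derivative_diff[OF lax_solution_derivatives(2)[OF sol]])
      (simp_all add: A.Yt_def A.Mt_def A.Omt_def)
  also have "Vt N lambda (Qmat N k q) x t *\<^sub>v Phi x t
      - (A.Yt ?Qx *\<^sub>v (minv (M x t) *\<^sub>v Om x t)
         + Y x t *\<^sub>v (- (minv (M x t) * A.Mt * minv (M x t)) *\<^sub>v Om x t + minv (M x t) *\<^sub>v A.Omt))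
    = Vt N lambda Qn x t *\<^sub>v Phin x t"
  proof -
    have Qn: "Qn x t = A.Qn"
      by (simp only: Qn_def A.Qn_def A.P_def)
    have Px: "P_x x t = A.Px"
      by (simp only: P_x_def A.Px_def Y_x_def A.Yx_def M_x_def A.Mx_def)
    have "Vt N lambda (Qmat N k q) x t
        = (\<i> * lambda^2) \<cdot>\<^sub>m sigma3 N + (\<i> * lambda) \<cdot>\<^sub>m Qmat N k q x t - A.C ?Qx"
      by (simp only: Vt_Qmat C)
    moreover have "Vt N lambda Qn x t = (\<i> * lambda^2) \<cdot>\<^sub>m sigma3 N + (\<i> * lambda) \<cdot>\<^sub>m A.Qn
        - (1/2) \<cdot>\<^sub>m (\<i> \<cdot>\<^sub>m (sigma3 N * (A.Qn * A.Qn))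
          - sigma3 N * (?Qx - \<i> \<cdot>\<^sub>m (sigma3 N * A.Px - A.Px * sigma3 N)))"
      by (simp only: Vt_def Qn mdx_Qn Px)
    ultimately show ?thesis
      unfolding Phin_def[rule_format] by (simp only: A.dressed_t_equation Qmat_dims)
  qed
  finally show ?thesis unfolding vhas_dt_iff .
qed

end

theorem mainTheorem3:
  fixes N k n :: nat
    and q :: "real \<Rightarrow> real \<Rightarrow> nat \<Rightarrow> complex"
    and lam :: "nat \<Rightarrow> complex"
    and Phis :: "nat \<Rightarrow> real \<Rightarrow> real \<Rightarrow> complex vec"
    and lambda :: complex
    and Phi :: "real \<Rightarrow> real \<Rightarrow> complex vec"
    and Md :: "nat \<Rightarrow> real \<Rightarrow> real \<Rightarrow> real"
    and M :: "real \<Rightarrow> real \<Rightarrow> complex mat"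
    and Y :: "real \<Rightarrow> real \<Rightarrow> complex mat"
    and Om :: "real \<Rightarrow> real \<Rightarrow> complex vec"
    and Phin :: "real \<Rightarrow> real \<Rightarrow> complex vec"
    and Qn :: "real \<Rightarrow> real \<Rightarrow> complex mat"
  assumes "N \<ge> 1" and "k \<le> N"
    and q_smooth: "\<forall>l < N. smooth2 (\<lambda>x t. q x t l)"
    and "n \<ge> 1"
    and sols: "\<forall>j < n. lax_solution N k q (lam j) (Phis j)"
    and distinct: "\<forall>i < n. \<forall>j < n. i \<noteq> j \<longrightarrow> lam j \<noteq> cnj (lam i)"
    and sol: "lax_solution N k q lambda Phi"
    and lambda_ne: "\<forall>i < n. lambda \<noteq> cnj (lam i)"
    and real_null: "\<forall>i < n. lam i \<in> \<real> \<longrightarrow> (\<forall>x t. herm (Phis i x t) (LambdaM N k) (Phis i x t) = 0)"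
    and real_smooth: "\<forall>i < n. lam i \<in> \<real> \<longrightarrow> smooth2 (\<lambda>x t. complex_of_real (Md i x t))"
    and real_dM: "\<forall>i < n. lam i \<in> \<real> \<longrightarrow> (\<forall>x t.
        ((\<lambda>y. complex_of_real (Md i y t)) has_vector_derivative
            omega_x N k (Phis i x t) (Phis i x t)) (at x) \<and>
        ((\<lambda>s. complex_of_real (Md i x s)) has_vector_derivative
            omega_t N k (Qmat N k q x t) (lam i) (lam i) (Phis i x t) (Phis i x t)) (at t))"
    and M_def: "\<forall>x t. M x t = mat n n (\<lambda>(i, j).
        if i = j \<and> lam i \<in> \<real> then complex_of_real (Md i x t)
        else herm (Phis i x t) (LambdaM N k) (Phis j x t) / (\<i> * (lam j - cnj (lam i))))"
    and M_inv: "\<forall>x t. invertible_mat (M x t)"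
    and Y_def: "\<forall>x t. Y x t = mat_of_cols (N+1) (map (\<lambda>j. Phis j x t) [0..<n])"
    and Om_def: "\<forall>x t. Om x t = vec n (\<lambda>i.
        herm (Phis i x t) (LambdaM N k) (Phi x t) / (\<i> * (lambda - cnj (lam i))))"
    and Phin_def: "\<forall>x t. Phin x t = Phi x t - Y x t *\<^sub>v (minv (M x t) *\<^sub>v Om x t)"
    and Qn_def: "\<forall>x t. Qn x t = Qmat N k q x t - \<i> \<cdot>\<^sub>m
        (sigma3 N * (Y x t * minv (M x t) * adj (Y x t) * LambdaM N k)
         - (Y x t * minv (M x t) * adj (Y x t) * LambdaM N k) * sigma3 N)"
  shows "\<forall>x t. mdiff_x Qn x t
      \<and> vhas_dx Phin (Ux N lambda Qn x t *\<^sub>v Phin x t) x t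
      \<and> vhas_dt Phin (Vt N lambda Qn x t *\<^sub>v Phin x t) x t"
proof -
  interpret darboux_transformation N k n q lam Phis lambda Phi Md M Y Om Phin Qn
    by unfold_locales (fact q_smooth sols distinct sol lambda_ne real_null real_dM M_def M_inv
        Y_def Om_def Phin_def Qn_def)+
  show ?thesis using Qn_mdiff_x Phin_x_derivative Phin_t_derivative by blast
qed

end
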